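(* Let $\mathbb C$ be a homological category with finite colimits, and let $x\colon X\to A$, $y\colon Y\to A$ be morphisms whose images are normal monomorphisms. Then the morphism $\gamma_1=\gamma_{1_A}\colon (A+X)\times_A(A+Y)\to A_3$ is a normal epimorphism.
   Context: A homological category is a regular pointed category in which the Split Short Five Lemma holds; the image of a morphism is the monomorphism part of its (regular epi, mono) factorization; a normal monomorphism is a kernel of some morphism and a normal epimorphism a cokernel of some morphism. Notation: $\iota_i$ coproduct injections, $[a,b]$ copairing, $\langle a,b,c\rangle$ pairing into a limit. $(A+X)\times_A(A+Y)$ is the pullback of $[1,0]\colon A+X\to A$ and $[1,0]\colon A+Y\to A$, with projections $\pi_1,\pi_2$. $A_3=A\times_{A/X}A\times_{A/Y}A$ is the limit of $A\xrightarrow{\mathsf{coker}(x)}A/X\xleftarrow{\mathsf{coker}(x)}A\xrightarrow{\mathsf{coker}(y)}A/Y\xleftarrow{\mathsf{coker}(y)}A$, and $\gamma_1=\langle [1,x]\pi_1,[1,0]\pi_1,[1,y]\pi_2\rangle$. *)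

theory Defs
  imports Main
begin

text \<open>A (small) category given by explicit data: objects, arrows, domain, codomain,
  identities and composition.  Comp C g f denotes the composite g after f.\<close>

record ('o, 'm) category_data =
  Obj  :: "'o set"
  Arr  :: "'m set"
  Dom  :: "'m \<Rightarrow> 'o"
  Cod  :: "'m \<Rightarrow> 'o"
  Idt  :: "'o \<Rightarrow> 'm"
  Comp :: "'m \<Rightarrow> 'm \<Rightarrow> 'm"

definition hom :: "('o, 'm) category_data \<Rightarrow> 'o \<Rightarrow> 'o \<Rightarrow> 'm set" where
  "hom C a b = {f \<in> Arr C. Dom C f = a \<and> Cod C f = b}"

definition category :: "('o, 'm) category_data \<Rightarrow> bool" where
  "category C \<longleftrightarrow>
     (\<forall>f \<in> Arr C. Dom C f \<in> Obj C \<and> Cod C f \<in> Obj C) \<and>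
     (\<forall>a \<in> Obj C. Idt C a \<in> hom C a a) \<and>
     (\<forall>f \<in> Arr C. \<forall>g \<in> Arr C. Cod C f = Dom C g \<longrightarrow>
         Comp C g f \<in> hom C (Dom C f) (Cod C g)) \<and>
     (\<forall>f \<in> Arr C. Comp C f (Idt C (Dom C f)) = f \<and> Comp C (Idt C (Cod C f)) f = f) \<and>
     (\<forall>f \<in> Arr C. \<forall>g \<in> Arr C. \<forall>h \<in> Arr C. Cod C f = Dom C g \<longrightarrow> Cod C g = Dom C h \<longrightarrow>
         Comp C h (Comp C g f) = Comp C (Comp C h g) f)"

definition mono :: "('o, 'm) category_data \<Rightarrow> 'm \<Rightarrow> bool" where
  "mono C m \<longleftrightarrow> m \<in> Arr C \<and>
     (\<forall>f \<in> Arr C. \<forall>g \<in> Arr C. Dom C f = Dom C g \<longrightarrow> Cod C f = Dom C m \<longrightarrow>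
        Cod C g = Dom C m \<longrightarrow> Comp C m f = Comp C m g \<longrightarrow> f = g)"

definition iso :: "('o, 'm) category_data \<Rightarrow> 'm \<Rightarrow> bool" where
  "iso C f \<longleftrightarrow> f \<in> Arr C \<and>
     (\<exists>g \<in> hom C (Cod C f) (Dom C f).
        Comp C g f = Idt C (Dom C f) \<and> Comp C f g = Idt C (Cod C f))"

definition initial :: "('o, 'm) category_data \<Rightarrow> 'o \<Rightarrow> bool" where
  "initial C i \<longleftrightarrow> i \<in> Obj C \<and> (\<forall>a \<in> Obj C. \<exists>!f. f \<in> hom C i a)"

definition terminal :: "('o, 'm) category_data \<Rightarrow> 'o \<Rightarrow> bool" where
  "terminal C t \<longleftrightarrow> t \<in> Obj C \<and> (\<forall>a \<in> Obj C. \<exists>!f. f \<in> hom C a t)"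

definition zero_obj :: "('o, 'm) category_data \<Rightarrow> 'o \<Rightarrow> bool" where
  "zero_obj C z \<longleftrightarrow> initial C z \<and> terminal C z"

definition pointed :: "('o, 'm) category_data \<Rightarrow> bool" where
  "pointed C \<longleftrightarrow> (\<exists>z. zero_obj C z)"

definition zero_arr :: "('o, 'm) category_data \<Rightarrow> 'm \<Rightarrow> bool" where
  "zero_arr C f \<longleftrightarrow> f \<in> Arr C \<and>
     (\<exists>z g h. zero_obj C z \<and> g \<in> hom C (Dom C f) z \<and> h \<in> hom C z (Cod C f) \<and> f = Comp C h g)"

definition is_kernel :: "('o, 'm) category_data \<Rightarrow> 'm \<Rightarrow> 'm \<Rightarrow> bool" where
  "is_kernel C k f \<longleftrightarrow> f \<in> Arr C \<and> k \<in> Arr C \<and> Cod C k = Dom C f \<and>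
     zero_arr C (Comp C f k) \<and>
     (\<forall>g \<in> Arr C. Cod C g = Dom C f \<longrightarrow> zero_arr C (Comp C f g) \<longrightarrow>
        (\<exists>!h. h \<in> hom C (Dom C g) (Dom C k) \<and> Comp C k h = g))"

definition is_cokernel :: "('o, 'm) category_data \<Rightarrow> 'm \<Rightarrow> 'm \<Rightarrow> bool" where
  "is_cokernel C q f \<longleftrightarrow> f \<in> Arr C \<and> q \<in> Arr C \<and> Dom C q = Cod C f \<and>
     zero_arr C (Comp C q f) \<and>
     (\<forall>g \<in> Arr C. Dom C g = Cod C f \<longrightarrow> zero_arr C (Comp C g f) \<longrightarrow>
        (\<exists>!h. h \<in> hom C (Cod C q) (Cod C g) \<and> Comp C h q = g))"

definition normal_mono :: "('o, 'm) category_data \<Rightarrow> 'm \<Rightarrow> bool" where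
  "normal_mono C m \<longleftrightarrow> (\<exists>f. is_kernel C m f)"

definition normal_epi :: "('o, 'm) category_data \<Rightarrow> 'm \<Rightarrow> bool" where
  "normal_epi C e \<longleftrightarrow> (\<exists>f. is_cokernel C e f)"

definition is_pullback :: "('o, 'm) category_data \<Rightarrow> 'm \<Rightarrow> 'm \<Rightarrow> 'm \<Rightarrow> 'm \<Rightarrow> bool" where
  "is_pullback C f g p1 p2 \<longleftrightarrow>
     f \<in> Arr C \<and> g \<in> Arr C \<and> Cod C f = Cod C g \<and>
     p1 \<in> Arr C \<and> p2 \<in> Arr C \<and> Dom C p1 = Dom C p2 \<and>
     Cod C p1 = Dom C f \<and> Cod C p2 = Dom C g \<and> Comp C f p1 = Comp C g p2 \<and>
     (\<forall>q1 \<in> Arr C. \<forall>q2 \<in> Arr C. Dom C q1 = Dom C q2 \<longrightarrow> Cod C q1 = Dom C f \<longrightarrow>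
        Cod C q2 = Dom C g \<longrightarrow> Comp C f q1 = Comp C g q2 \<longrightarrow>
        (\<exists>!h. h \<in> hom C (Dom C q1) (Dom C p1) \<and> Comp C p1 h = q1 \<and> Comp C p2 h = q2))"

definition is_pushout :: "('o, 'm) category_data \<Rightarrow> 'm \<Rightarrow> 'm \<Rightarrow> 'm \<Rightarrow> 'm \<Rightarrow> bool" where
  "is_pushout C f g p1 p2 \<longleftrightarrow>
     f \<in> Arr C \<and> g \<in> Arr C \<and> Dom C f = Dom C g \<and>
     p1 \<in> Arr C \<and> p2 \<in> Arr C \<and> Cod C p1 = Cod C p2 \<and>
     Dom C p1 = Cod C f \<and> Dom C p2 = Cod C g \<and> Comp C p1 f = Comp C p2 g \<and>
     (\<forall>q1 \<in> Arr C. \<forall>q2 \<in> Arr C. Cod C q1 = Cod C q2 \<longrightarrow> Dom C q1 = Cod C f \<longrightarrow>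
        Dom C q2 = Cod C g \<longrightarrow> Comp C q1 f = Comp C q2 g \<longrightarrow>
        (\<exists>!h. h \<in> hom C (Cod C p1) (Cod C q1) \<and> Comp C h p1 = q1 \<and> Comp C h p2 = q2))"

definition is_coequalizer :: "('o, 'm) category_data \<Rightarrow> 'm \<Rightarrow> 'm \<Rightarrow> 'm \<Rightarrow> bool" where
  "is_coequalizer C e f g \<longleftrightarrow>
     f \<in> Arr C \<and> g \<in> Arr C \<and> Dom C f = Dom C g \<and> Cod C f = Cod C g \<and>
     e \<in> Arr C \<and> Dom C e = Cod C f \<and> Comp C e f = Comp C e g \<and>
     (\<forall>h \<in> Arr C. Dom C h = Cod C f \<longrightarrow> Comp C h f = Comp C h g \<longrightarrow>
        (\<exists>!u. u \<in> hom C (Cod C e) (Cod C h) \<and> Comp C u e = h))"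

definition regular_epi :: "('o, 'm) category_data \<Rightarrow> 'm \<Rightarrow> bool" where
  "regular_epi C e \<longleftrightarrow> (\<exists>f g. is_coequalizer C e f g)"

definition finitely_complete :: "('o, 'm) category_data \<Rightarrow> bool" where
  "finitely_complete C \<longleftrightarrow> (\<exists>t. terminal C t) \<and>
     (\<forall>f \<in> Arr C. \<forall>g \<in> Arr C. Cod C f = Cod C g \<longrightarrow> (\<exists>p1 p2. is_pullback C f g p1 p2))"

definition finitely_cocomplete :: "('o, 'm) category_data \<Rightarrow> bool" where
  "finitely_cocomplete C \<longleftrightarrow> (\<exists>i. initial C i) \<and>
     (\<forall>f \<in> Arr C. \<forall>g \<in> Arr C. Dom C f = Dom C g \<longrightarrow> (\<exists>p1 p2. is_pushout C f g p1 p2))"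

definition regular_category :: "('o, 'm) category_data \<Rightarrow> bool" where
  "regular_category C \<longleftrightarrow> category C \<and> finitely_complete C \<and>
     (\<forall>f \<in> Arr C. \<exists>e m. regular_epi C e \<and> mono C m \<and> Cod C e = Dom C m \<and> f = Comp C m e) \<and>
     (\<forall>e f p1 p2. regular_epi C e \<longrightarrow> is_pullback C e f p1 p2 \<longrightarrow> regular_epi C p2)"

definition split_short_five_lemma :: "('o, 'm) category_data \<Rightarrow> bool" where
  "split_short_five_lemma C \<longleftrightarrow>
     (\<forall>p s k p' s' k' u v w.
        p \<in> Arr C \<longrightarrow> s \<in> hom C (Cod C p) (Dom C p) \<longrightarrow> Comp C p s = Idt C (Cod C p) \<longrightarrow>
        is_kernel C k p \<longrightarrow>
        p' \<in> Arr C \<longrightarrow> s' \<in> hom C (Cod C p') (Dom C p') \<longrightarrow> Comp C p' s' = Idt C (Cod C p') \<longrightarrow>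
        is_kernel C k' p' \<longrightarrow>
        u \<in> hom C (Dom C k) (Dom C k') \<longrightarrow> v \<in> hom C (Dom C p) (Dom C p') \<longrightarrow>
        w \<in> hom C (Cod C p) (Cod C p') \<longrightarrow>
        Comp C v k = Comp C k' u \<longrightarrow> Comp C p' v = Comp C w p \<longrightarrow> Comp C v s = Comp C s' w \<longrightarrow>
        iso C u \<longrightarrow> iso C w \<longrightarrow> iso C v)"

definition homological :: "('o, 'm) category_data \<Rightarrow> bool" where
  "homological C \<longleftrightarrow> regular_category C \<and> pointed C \<and> split_short_five_lemma C"

definition image_is_normal_mono :: "('o, 'm) category_data \<Rightarrow> 'm \<Rightarrow> bool" where
  "image_is_normal_mono C f \<longleftrightarrow>
     (\<exists>e m. regular_epi C e \<and> mono C m \<and> normal_mono C m \<and> Cod C e = Dom C m \<and> f = Comp C m e)"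

definition is_coproduct :: "('o, 'm) category_data \<Rightarrow> 'o \<Rightarrow> 'o \<Rightarrow> 'o \<Rightarrow> 'm \<Rightarrow> 'm \<Rightarrow> bool" where
  "is_coproduct C a b s i1 i2 \<longleftrightarrow> i1 \<in> hom C a s \<and> i2 \<in> hom C b s \<and>
     (\<forall>c f g. f \<in> hom C a c \<longrightarrow> g \<in> hom C b c \<longrightarrow>
        (\<exists>!h. h \<in> hom C s c \<and> Comp C h i1 = f \<and> Comp C h i2 = g))"

text \<open>Limit L (with projections l1 l2 l3) of the diagram
  A --qx--> A/X <--qx-- A --qy--> A/Y <--qy-- A.\<close>
definition is_A3_limit :: "('o, 'm) category_data \<Rightarrow> 'm \<Rightarrow> 'm \<Rightarrow> 'o \<Rightarrow> 'm \<Rightarrow> 'm \<Rightarrow> 'm \<Rightarrow> bool" where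
  "is_A3_limit C qx qy L l1 l2 l3 \<longleftrightarrow>
     qx \<in> Arr C \<and> qy \<in> Arr C \<and> Dom C qx = Dom C qy \<and>
     l1 \<in> hom C L (Dom C qx) \<and> l2 \<in> hom C L (Dom C qx) \<and> l3 \<in> hom C L (Dom C qx) \<and>
     Comp C qx l1 = Comp C qx l2 \<and> Comp C qy l2 = Comp C qy l3 \<and>
     (\<forall>T m1 m2 m3. m1 \<in> hom C T (Dom C qx) \<longrightarrow> m2 \<in> hom C T (Dom C qx) \<longrightarrow>
        m3 \<in> hom C T (Dom C qx) \<longrightarrow>
        Comp C qx m1 = Comp C qx m2 \<longrightarrow> Comp C qy m2 = Comp C qy m3 \<longrightarrow>
        (\<exists>!h. h \<in> hom C T L \<and> Comp C l1 h = m1 \<and> Comp C l2 h = m2 \<and> Comp C l3 h = m3))"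

end

theory Submission
  imports Defs
begin

text \<open>Factor \<gamma>1 = m e with e a regular epimorphism and m a monomorphism. In a homological
  category regular epimorphisms are normal, so it suffices to show that m is invertible.
  The image of \<gamma>1 contains the diagonal of A3 and the elements (x,0,0) and (0,0,y), coming
  from the coproduct injections; since regular epimorphisms are orthogonal to monomorphisms it
  then also contains (mx,0,0) and (0,0,my), where mx and my are the images of x and y, i.e. the
  kernels of A \<rightarrow> A/X and A \<rightarrow> A/Y. The diagonal splits the middle projection A3 \<rightarrow> A, whose
  kernel is in turn a split extension of ker(A \<rightarrow> A/Y) by a subobject of ker(A \<rightarrow> A/X). The
  Split Short Five Lemma, in the form "a monomorphism containing the section and the kernel
  of a split epimorphism is invertible", applied to both split extensions shows that m is
  invertible.\<close>

locale cat =
  fixes C :: "('o, 'm) category_data"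
  assumes category: "category C"
begin

abbreviation comp (infixr "\<cdot>" 55) where "g \<cdot> f \<equiv> Comp C g f"

lemma dom_obj: "f \<in> Arr C \<Longrightarrow> Dom C f \<in> Obj C"
  and cod_obj: "f \<in> Arr C \<Longrightarrow> Cod C f \<in> Obj C"
  using category unfolding category_def by blast+

lemma comp_arr [simp]: "\<lbrakk>f \<in> Arr C; g \<in> Arr C; Cod C f = Dom C g\<rbrakk> \<Longrightarrow> g \<cdot> f \<in> Arr C"
  and dom_comp [simp]: "\<lbrakk>f \<in> Arr C; g \<in> Arr C; Cod C f = Dom C g\<rbrakk> \<Longrightarrow> Dom C (g \<cdot> f) = Dom C f"
  and cod_comp [simp]: "\<lbrakk>f \<in> Arr C; g \<in> Arr C; Cod C f = Dom C g\<rbrakk> \<Longrightarrow> Cod C (g \<cdot> f) = Cod C g"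
  using category unfolding category_def hom_def by blast+

lemma id_arr [simp]: "a \<in> Obj C \<Longrightarrow> Idt C a \<in> Arr C"
  and dom_id [simp]: "a \<in> Obj C \<Longrightarrow> Dom C (Idt C a) = a"
  and cod_id [simp]: "a \<in> Obj C \<Longrightarrow> Cod C (Idt C a) = a"
  using category unfolding category_def hom_def by blast+

lemma comp_id_right [simp]: "f \<in> Arr C \<Longrightarrow> Dom C f = a \<Longrightarrow> f \<cdot> Idt C a = f"
  and comp_id_left [simp]: "f \<in> Arr C \<Longrightarrow> Cod C f = a \<Longrightarrow> Idt C a \<cdot> f = f"
  using category unfolding category_def by blast+

lemma comp_assoc:
  "\<lbrakk>f \<in> Arr C; g \<in> Arr C; h \<in> Arr C; Cod C f = Dom C g; Cod C g = Dom C h\<rbrakk>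
     \<Longrightarrow> (h \<cdot> g) \<cdot> f = h \<cdot> (g \<cdot> f)"
  using category unfolding category_def by metis

lemma comp_reduce:
  "\<lbrakk>f \<in> Arr C; g \<in> Arr C; h \<in> Arr C; Cod C f = Dom C g; Cod C g = Dom C h; h \<cdot> g = k\<rbrakk>
     \<Longrightarrow> h \<cdot> (g \<cdot> f) = k \<cdot> f"
  using comp_assoc by metis

lemma comp_reduce':
  "\<lbrakk>f \<in> Arr C; g \<in> Arr C; h \<in> Arr C; Cod C f = Dom C g; Cod C g = Dom C h; g \<cdot> f = k\<rbrakk>
     \<Longrightarrow> (h \<cdot> g) \<cdot> f = h \<cdot> k"
  using comp_assoc by metis

lemma comp_square:
  "\<lbrakk>f \<in> Arr C; g \<in> Arr C; h \<in> Arr C; g' \<in> Arr C; h' \<in> Arr C; Cod C f = Dom C g; Cod C g = Dom C h;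
    Cod C f = Dom C g'; Cod C g' = Dom C h'; h \<cdot> g = h' \<cdot> g'\<rbrakk>
     \<Longrightarrow> h \<cdot> (g \<cdot> f) = h' \<cdot> (g' \<cdot> f)"
  using comp_assoc by metis

lemma homI: "f \<in> Arr C \<Longrightarrow> Dom C f = a \<Longrightarrow> Cod C f = b \<Longrightarrow> f \<in> hom C a b"
  and homD: "f \<in> hom C a b \<Longrightarrow> f \<in> Arr C \<and> Dom C f = a \<and> Cod C f = b"
  unfolding hom_def by blast+

lemma ex1_uniq: "\<exists>!x. P x \<Longrightarrow> P a \<Longrightarrow> P b \<Longrightarrow> a = b"
  by blast

lemma mono_arr: "mono C m \<Longrightarrow> m \<in> Arr C"
  unfolding mono_def by blast

lemma mono_cancel:
  "\<lbrakk>mono C m; f \<in> Arr C; g \<in> Arr C; Dom C f = Dom C g; Cod C f = Dom C m; Cod C g = Dom C m;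
    m \<cdot> f = m \<cdot> g\<rbrakk> \<Longrightarrow> f = g"
  unfolding mono_def by blast

lemma split_mono:
  assumes "s \<in> Arr C" "r \<in> Arr C" "Cod C s = Dom C r" "r \<cdot> s = Idt C (Dom C s)"
  shows "mono C s"
  unfolding mono_def
proof (intro conjI ballI impI)
  fix u w assume u: "u \<in> Arr C" "w \<in> Arr C" "Dom C u = Dom C w" "Cod C u = Dom C s"
    "Cod C w = Dom C s" "s \<cdot> u = s \<cdot> w"
  have "u = (r \<cdot> s) \<cdot> u" using assms u by simp
  also have "\<dots> = (r \<cdot> s) \<cdot> w" using comp_assoc assms u by metis
  also have "\<dots> = w" using assms u by simp
  finally show "u = w" .
qed (fact assms(1))

lemma isoE:
  assumes "iso C f"
  obtains g where "g \<in> Arr C" "Dom C g = Cod C f" "Cod C g = Dom C f"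
    "g \<cdot> f = Idt C (Dom C f)" "f \<cdot> g = Idt C (Cod C f)"
  using assms unfolding iso_def hom_def by blast

lemma iso_arr: "iso C f \<Longrightarrow> f \<in> Arr C"
  unfolding iso_def by blast

lemma id_iso: "a \<in> Obj C \<Longrightarrow> iso C (Idt C a)"
  unfolding iso_def hom_def by (intro conjI bexI[of _ "Idt C a"]) auto

lemma iso_cancel_right:
  assumes "iso C e" "u \<in> Arr C" "w \<in> Arr C" "Dom C u = Cod C e" "Dom C w = Cod C e"
    and "u \<cdot> e = w \<cdot> e"
  shows "u = w"
proof -
  obtain i where i: "i \<in> Arr C" "Dom C i = Cod C e" "Cod C i = Dom C e" "e \<cdot> i = Idt C (Cod C e)"
    using isoE[OF assms(1)] by blast
  have e: "e \<in> Arr C" using iso_arr[OF assms(1)] .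
  have "u = (u \<cdot> e) \<cdot> i" using comp_assoc[of i e u] i e assms by simp
  also have "\<dots> = w" using comp_assoc[of i e w] i e assms by simp
  finally show ?thesis .
qed

definition factors_through :: "'m \<Rightarrow> 'm \<Rightarrow> bool" where
  "factors_through f m \<longleftrightarrow> (\<exists>d. d \<in> Arr C \<and> Dom C d = Dom C f \<and> Cod C d = Dom C m \<and> m \<cdot> d = f)"

lemma factors_throughI:
  "d \<in> Arr C \<Longrightarrow> Dom C d = Dom C f \<Longrightarrow> Cod C d = Dom C m \<Longrightarrow> m \<cdot> d = f \<Longrightarrow> factors_through f m"
  unfolding factors_through_def by blast

lemma factors_throughE:
  assumes "factors_through f m"
  obtains d where "d \<in> Arr C" "Dom C d = Dom C f" "Cod C d = Dom C m" "m \<cdot> d = f"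
  using assms unfolding factors_through_def by blast

lemma factors_through_comp:
  assumes "factors_through f m" "m \<in> Arr C" "h \<in> Arr C" "Cod C h = Dom C f"
  shows "factors_through (f \<cdot> h) m"
proof -
  obtain d where d: "d \<in> Arr C" "Dom C d = Dom C f" "Cod C d = Dom C m" "m \<cdot> d = f"
    using factors_throughE[OF assms(1)] by blast
  show ?thesis
    by (rule factors_throughI[of "d \<cdot> h"]) (use d assms comp_reduce[of h d m f] in auto)
qed

definition section_of :: "'m \<Rightarrow> 'm \<Rightarrow> bool" where
  "section_of s p \<longleftrightarrow> p \<in> Arr C \<and> s \<in> hom C (Cod C p) (Dom C p) \<and> p \<cdot> s = Idt C (Cod C p)"

lemma section_ofD:
  "section_of s p \<Longrightarrow> p \<in> Arr C \<and> s \<in> Arr C \<and> Dom C s = Cod C p \<and> Cod C s = Dom C p \<and>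
     p \<cdot> s = Idt C (Cod C p)"
  unfolding section_of_def hom_def by blast

end

locale pointed_cat = cat +
  fixes z assumes zero_obj: "zero_obj C z"
begin

definition to_zero where "to_zero a = (THE f. f \<in> hom C a z)"
definition from_zero where "from_zero b = (THE f. f \<in> hom C z b)"
definition zero where "zero a b = from_zero b \<cdot> to_zero a"

lemma to_zero: "a \<in> Obj C \<Longrightarrow> to_zero a \<in> Arr C \<and> Dom C (to_zero a) = a \<and> Cod C (to_zero a) = z"
  and to_zero_unique: "f \<in> Arr C \<Longrightarrow> Cod C f = z \<Longrightarrow> Dom C f = a \<Longrightarrow> f = to_zero a"
proof -
  have *: "\<exists>!f. f \<in> hom C a z" if "a \<in> Obj C" for a
    using zero_obj that unfolding zero_obj_def terminal_def by blast
  show "a \<in> Obj C \<Longrightarrow> to_zero a \<in> Arr C \<and> Dom C (to_zero a) = a \<and> Cod C (to_zero a) = z"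
    using theI'[OF *] unfolding to_zero_def hom_def by blast
  show "f \<in> Arr C \<Longrightarrow> Cod C f = z \<Longrightarrow> Dom C f = a \<Longrightarrow> f = to_zero a"
    using *[of a] dom_obj
      unfolding to_zero_def hom_def by (metis (mono_tags, lifting) mem_Collect_eq the_equality)
qed

lemma from_zero:
  "b \<in> Obj C \<Longrightarrow> from_zero b \<in> Arr C \<and> Dom C (from_zero b) = z \<and> Cod C (from_zero b) = b"
  and from_zero_unique: "f \<in> Arr C \<Longrightarrow> Dom C f = z \<Longrightarrow> Cod C f = b \<Longrightarrow> f = from_zero b"
proof -
  have *: "\<exists>!f. f \<in> hom C z b" if "b \<in> Obj C" for b
    using zero_obj that unfolding zero_obj_def initial_def by blast
  show "b \<in> Obj C \<Longrightarrow> from_zero b \<in> Arr C \<and> Dom C (from_zero b) = z \<and> Cod C (from_zero b) = b"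
    using theI'[OF *] unfolding from_zero_def hom_def by blast
  show "f \<in> Arr C \<Longrightarrow> Dom C f = z \<Longrightarrow> Cod C f = b \<Longrightarrow> f = from_zero b"
    using *[of b] cod_obj
      unfolding from_zero_def hom_def by (metis (mono_tags, lifting) mem_Collect_eq the_equality)
qed

lemma zero_arr [simp]: "a \<in> Obj C \<Longrightarrow> b \<in> Obj C \<Longrightarrow> zero a b \<in> Arr C"
  and dom_zero [simp]: "a \<in> Obj C \<Longrightarrow> b \<in> Obj C \<Longrightarrow> Dom C (zero a b) = a"
  and cod_zero [simp]: "a \<in> Obj C \<Longrightarrow> b \<in> Obj C \<Longrightarrow> Cod C (zero a b) = b"
  unfolding zero_def using to_zero from_zero by auto

text \<open>Any two zero objects are isomorphic, so it does not matter through which one a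
  zero morphism factors.\<close>
lemma zero_arr_iff: "f \<in> Arr C \<Longrightarrow> zero_arr C f \<longleftrightarrow> f = zero (Dom C f) (Cod C f)"
proof
  assume f: "f \<in> Arr C" and "zero_arr C f"
  then obtain z' g h where z': "zero_obj C z'" and g: "g \<in> hom C (Dom C f) z'"
    and h: "h \<in> hom C z' (Cod C f)" and f_eq: "f = h \<cdot> g"
    unfolding zero_arr_def by blast
  have "z' \<in> Obj C" using z' unfolding zero_obj_def initial_def by blast
  then obtain \<phi> where \<phi>: "\<phi> \<in> hom C z z'" using zero_obj unfolding zero_obj_def initial_def by blast
  have objs: "Dom C f \<in> Obj C" "Cod C f \<in> Obj C" using f dom_obj cod_obj by auto
  have "g = \<phi> \<cdot> to_zero (Dom C f)"
  proof -
    have "\<exists>!f'. f' \<in> hom C (Dom C f) z'" using z' objs unfolding zero_obj_def terminal_def by blast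
    moreover have "\<phi> \<cdot> to_zero (Dom C f) \<in> hom C (Dom C f) z'"
      using \<phi> to_zero[OF objs(1)] unfolding hom_def by auto
    ultimately show ?thesis using g by blast
  qed
  moreover have "h \<cdot> \<phi> = from_zero (Cod C f)"
    using from_zero_unique[of "h \<cdot> \<phi>"] \<phi> h unfolding hom_def by auto
  ultimately show "f = zero (Dom C f) (Cod C f)"
    using f_eq comp_assoc[of "to_zero (Dom C f)" \<phi> h] \<phi> h to_zero[OF objs(1)]
    unfolding zero_def hom_def by auto
next
  assume f: "f \<in> Arr C" and "f = zero (Dom C f) (Cod C f)"
  then show "zero_arr C f"
    using zero_obj to_zero[OF dom_obj] from_zero[OF cod_obj]
      unfolding zero_arr_def zero_def hom_def by blast
qed

lemma zero_is_zero_arr: "a \<in> Obj C \<Longrightarrow> b \<in> Obj C \<Longrightarrow> zero_arr C (zero a b)"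
  using zero_arr_iff[of "zero a b"] by simp

lemma comp_zero [simp]:
  assumes "g \<in> Arr C" "Dom C g = b" "a \<in> Obj C"
  shows "g \<cdot> zero a b = zero a (Cod C g)"
proof -
  have b: "b \<in> Obj C" using assms dom_obj by auto
  have "g \<cdot> from_zero b = from_zero (Cod C g)"
    using from_zero_unique[of "g \<cdot> from_zero b"] from_zero[OF b] assms by auto
  then show ?thesis
    unfolding zero_def
      using comp_assoc[of "to_zero a"
        "from_zero b" g] to_zero[OF assms(3)] from_zero[OF b] assms by auto
qed

lemma zero_comp [simp]:
  assumes "f \<in> Arr C" "Cod C f = b" "c \<in> Obj C"
  shows "zero b c \<cdot> f = zero (Dom C f) c"
proof -
  have b: "b \<in> Obj C" using assms cod_obj by auto
  have "to_zero b \<cdot> f = to_zero (Dom C f)"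
    using to_zero_unique[of "to_zero b \<cdot> f"] to_zero[OF b] assms by auto
  then show ?thesis
    unfolding zero_def
      using comp_assoc[of f "to_zero b"
        "from_zero c"] to_zero[OF b] from_zero[OF assms(3)] assms by auto
qed

lemma kernelD:
  "is_kernel C k f \<Longrightarrow> k \<in> Arr C \<and> f \<in> Arr C \<and> Cod C k = Dom C f \<and> f \<cdot> k = zero (Dom C k) (Cod C f)"
proof -
  assume "is_kernel C k f"
  then have "k \<in> Arr C" "f \<in> Arr C" "Cod C k = Dom C f" "zero_arr C (f \<cdot> k)"
    unfolding is_kernel_def by blast+
  then show ?thesis using zero_arr_iff[of "f \<cdot> k"] by simp
qed

lemma kernel_lift:
  assumes "is_kernel C k f" "g \<in> Arr C" "Cod C g = Dom C f" "f \<cdot> g = zero (Dom C g) (Cod C f)"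
  shows "\<exists>!h. h \<in> hom C (Dom C g) (Dom C k) \<and> k \<cdot> h = g"
proof -
  have "zero_arr C (f \<cdot> g)" using assms zero_is_zero_arr kernelD dom_obj cod_obj by metis
  then show ?thesis using assms unfolding is_kernel_def by blast
qed

lemma kernel_liftE:
  assumes "is_kernel C k f" "g \<in> Arr C" "Cod C g = Dom C f" "f \<cdot> g = zero (Dom C g) (Cod C f)"
  obtains h where "h \<in> Arr C" "Dom C h = Dom C g" "Cod C h = Dom C k" "k \<cdot> h = g"
  using kernel_lift[OF assms] homD by blast

lemma kernel_mono:
  assumes "is_kernel C k f"
  shows "mono C k"
  unfolding mono_def
proof (intro conjI ballI impI)
  have K: "k \<in> Arr C" "f \<in> Arr C" "Cod C k = Dom C f" "f \<cdot> k = zero (Dom C k) (Cod C f)"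
    using kernelD[OF assms] by auto
  then show "k \<in> Arr C" by blast
  fix u w assume u: "u \<in> Arr C" "w \<in> Arr C" "Dom C u = Dom C w" "Cod C u = Dom C k"
    "Cod C w = Dom C k" "k \<cdot> u = k \<cdot> w"
  have "f \<cdot> (k \<cdot> u) = zero (Dom C u) (Cod C f)"
    using comp_assoc[of u k f] K u dom_obj cod_obj by simp
  then have "\<exists>!h. h \<in> hom C (Dom C u) (Dom C k) \<and> k \<cdot> h = k \<cdot> u"
    using kernel_lift[OF assms, of "k \<cdot> u"] K u by simp
  then show "u = w" by (rule ex1_uniq) (use u homI in auto)
qed

lemma kernelI:
  assumes "k \<in> Arr C" "f \<in> Arr C" "Cod C k = Dom C f" "f \<cdot> k = zero (Dom C k) (Cod C f)" "mono C k"
    and "\<And>g. g \<in> Arr C \<Longrightarrow> Cod C g = Dom C f \<Longrightarrow> f \<cdot> g = zero (Dom C g) (Cod C f) \<Longrightarrow>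
       factors_through g k"
  shows "is_kernel C k f"
  unfolding is_kernel_def
proof (intro conjI ballI impI)
  show "zero_arr C (f \<cdot> k)" using assms zero_is_zero_arr dom_obj cod_obj by simp
  fix g assume g: "g \<in> Arr C" "Cod C g = Dom C f" "zero_arr C (f \<cdot> g)"
  then have "f \<cdot> g = zero (Dom C g) (Cod C f)" using zero_arr_iff[of "f \<cdot> g"] assms by simp
  then obtain h where h: "h \<in> Arr C" "Dom C h = Dom C g" "Cod C h = Dom C k" "k \<cdot> h = g"
    using assms(6) g(1,2) factors_throughE by blast
  show "\<exists>!h. h \<in> hom C (Dom C g) (Dom C k) \<and> k \<cdot> h = g"
  proof (rule ex1I[of _ h])
    fix h' assume "h' \<in> hom C (Dom C g) (Dom C k) \<and> k \<cdot> h' = g"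
    then show "h' = h" using h mono_cancel[OF assms(5), of h' h] homD by metis
  qed (use h homI in blast)
qed (use assms in blast)+

lemma cokernelD:
  "is_cokernel C q f \<Longrightarrow> q \<in> Arr C \<and> f \<in> Arr C \<and> Dom C q = Cod C f \<and> q \<cdot> f = zero (Dom C f) (Cod C q)"
proof -
  assume "is_cokernel C q f"
  then have "q \<in> Arr C" "f \<in> Arr C" "Dom C q = Cod C f" "zero_arr C (q \<cdot> f)"
    unfolding is_cokernel_def by blast+
  then show ?thesis using zero_arr_iff[of "q \<cdot> f"] by simp
qed

lemma cokernel_desc:
  assumes "is_cokernel C q f" "g \<in> Arr C" "Dom C g = Cod C f" "g \<cdot> f = zero (Dom C f) (Cod C g)"
  shows "\<exists>!h. h \<in> hom C (Cod C q) (Cod C g) \<and> h \<cdot> q = g"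
proof -
  have "zero_arr C (g \<cdot> f)" using assms zero_is_zero_arr cokernelD dom_obj cod_obj by metis
  then show ?thesis using assms unfolding is_cokernel_def by blast
qed

lemma cokernel_descE:
  assumes "is_cokernel C q f" "g \<in> Arr C" "Dom C g = Cod C f" "g \<cdot> f = zero (Dom C f) (Cod C g)"
  obtains h where "h \<in> Arr C" "Dom C h = Cod C q" "Cod C h = Cod C g" "h \<cdot> q = g"
  using cokernel_desc[OF assms] homD by blast

lemma cokernel_epi:
  assumes "is_cokernel C q f" "u \<in> Arr C" "w \<in> Arr C" "Dom C u = Cod C q" "Dom C w = Cod C q"
    and "Cod C u = Cod C w" "u \<cdot> q = w \<cdot> q"
  shows "u = w"
proof -
  have K: "q \<in> Arr C" "f \<in> Arr C" "Dom C q = Cod C f" "q \<cdot> f = zero (Dom C f) (Cod C q)"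
    using cokernelD[OF assms(1)] by auto
  have "(u \<cdot> q) \<cdot> f = zero (Dom C f) (Cod C u)"
    using comp_assoc[of f q u] K assms dom_obj cod_obj by simp
  then have "\<exists>!h. h \<in> hom C (Cod C q) (Cod C u) \<and> h \<cdot> q = u \<cdot> q"
    using cokernel_desc[OF assms(1), of "u \<cdot> q"] K assms by simp
  then show "u = w" by (rule ex1_uniq) (use assms homI in auto)
qed

lemma cokernelI:
  assumes "q \<in> Arr C" "f \<in> Arr C" "Dom C q = Cod C f" "q \<cdot> f = zero (Dom C f) (Cod C q)"
    and "\<And>u w. u \<in> Arr C \<Longrightarrow> w \<in> Arr C \<Longrightarrow> Dom C u = Cod C q \<Longrightarrow> Dom C w = Cod C q \<Longrightarrow>
       Cod C u = Cod C w \<Longrightarrow> u \<cdot> q = w \<cdot> q \<Longrightarrow> u = w"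
    and "\<And>g. g \<in> Arr C \<Longrightarrow> Dom C g = Cod C f \<Longrightarrow> g \<cdot> f = zero (Dom C f) (Cod C g) \<Longrightarrow>
       \<exists>h. h \<in> Arr C \<and> Dom C h = Cod C q \<and> Cod C h = Cod C g \<and> h \<cdot> q = g"
  shows "is_cokernel C q f"
  unfolding is_cokernel_def
proof (intro conjI ballI impI)
  show "zero_arr C (q \<cdot> f)" using assms(1-4) zero_is_zero_arr dom_obj cod_obj by simp
  fix g assume g: "g \<in> Arr C" "Dom C g = Cod C f" "zero_arr C (g \<cdot> f)"
  then have "g \<cdot> f = zero (Dom C f) (Cod C g)" using zero_arr_iff[of "g \<cdot> f"] assms(1-4) by simp
  then obtain h where h: "h \<in> Arr C" "Dom C h = Cod C q" "Cod C h = Cod C g" "h \<cdot> q = g"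
    using assms(6) g by blast
  show "\<exists>!h. h \<in> hom C (Cod C q) (Cod C g) \<and> h \<cdot> q = g"
  proof (rule ex1I[of _ h])
    fix h' assume "h' \<in> hom C (Cod C q) (Cod C g) \<and> h' \<cdot> q = g"
    then show "h' = h" using h assms(5)[of h' h] homD by metis
  qed (use h homI in blast)
qed (use assms(1-3) in blast)+

lemma pullbackD:
  "is_pullback C f g p1 p2 \<Longrightarrow> f \<in> Arr C \<and> g \<in> Arr C \<and> p1 \<in> Arr C \<and> p2 \<in> Arr C \<and>
     Cod C f = Cod C g \<and> Dom C p1 = Dom C p2 \<and> Cod C p1 = Dom C f \<and> Cod C p2 = Dom C g \<and>
     f \<cdot> p1 = g \<cdot> p2"
  unfolding is_pullback_def by blast

lemma pullback_universal:
  "\<lbrakk>is_pullback C f g p1 p2; q1 \<in> Arr C; q2 \<in> Arr C; Dom C q1 = Dom C q2;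
    Cod C q1 = Dom C f; Cod C q2 = Dom C g; f \<cdot> q1 = g \<cdot> q2\<rbrakk>
     \<Longrightarrow> \<exists>!h. h \<in> hom C (Dom C q1) (Dom C p1) \<and> p1 \<cdot> h = q1 \<and> p2 \<cdot> h = q2"
  unfolding is_pullback_def by blast

lemma pullback_liftE:
  assumes "is_pullback C f g p1 p2" "q1 \<in> Arr C" "q2 \<in> Arr C" "Dom C q1 = Dom C q2"
    "Cod C q1 = Dom C f" "Cod C q2 = Dom C g" "f \<cdot> q1 = g \<cdot> q2"
  obtains h where "h \<in> Arr C" "Dom C h = Dom C q1" "Cod C h = Dom C p1" "p1 \<cdot> h = q1" "p2 \<cdot> h = q2"
  using pullback_universal[OF assms] homD by blast

lemma pullback_eqI:
  assumes P: "is_pullback C f g p1 p2" and h: "h \<in> Arr C" "h' \<in> Arr C" "Dom C h = Dom C h'"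
    "Cod C h = Dom C p1" "Cod C h' = Dom C p1" and "p1 \<cdot> h = p1 \<cdot> h'" "p2 \<cdot> h = p2 \<cdot> h'"
  shows "h = h'"
proof -
  note D = pullbackD[OF P]
  have "f \<cdot> (p1 \<cdot> h) = g \<cdot> (p2 \<cdot> h)" by (rule comp_square) (use D h in simp_all)
  then have "\<exists>!k. k \<in> hom C (Dom C h) (Dom C p1) \<and> p1 \<cdot> k = p1 \<cdot> h \<and> p2 \<cdot> k = p2 \<cdot> h"
    using pullback_universal[OF P, of "p1 \<cdot> h" "p2 \<cdot> h"] D h by simp
  then show "h = h'" by (rule ex1_uniq) (use assms homI in auto)
qed

lemma pullback_mono:
  assumes P: "is_pullback C f m p1 p2" and "mono C m"
  shows "mono C p1"
  unfolding mono_def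
proof (intro conjI ballI impI)
  note D = pullbackD[OF P]
  show "p1 \<in> Arr C" using D by blast
  fix u w assume u: "u \<in> Arr C" "w \<in> Arr C" "Dom C u = Dom C w" "Cod C u = Dom C p1"
    "Cod C w = Dom C p1" "p1 \<cdot> u = p1 \<cdot> w"
  have "m \<cdot> (p2 \<cdot> u) = f \<cdot> (p1 \<cdot> u)" by (rule comp_square) (use D u in simp_all)
  also have "\<dots> = f \<cdot> (p1 \<cdot> w)" using u by simp
  also have "\<dots> = m \<cdot> (p2 \<cdot> w)" by (rule comp_square) (use D u in simp_all)
  finally have "p2 \<cdot> u = p2 \<cdot> w" using mono_cancel[OF assms(2)] D u by simp
  then show "u = w" using pullback_eqI[OF P, of u w] u by simp
qed

lemma coequalizerD:
  "is_coequalizer C e a b \<Longrightarrow> e \<in> Arr C \<and> a \<in> Arr C \<and> b \<in> Arr C \<and> Dom C e = Cod C a \<and>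
     Cod C a = Cod C b \<and> Dom C a = Dom C b \<and> e \<cdot> a = e \<cdot> b"
  unfolding is_coequalizer_def by blast

lemma coequalizer_universal:
  "\<lbrakk>is_coequalizer C e a b; h \<in> Arr C; Dom C h = Cod C a; h \<cdot> a = h \<cdot> b\<rbrakk>
     \<Longrightarrow> \<exists>!u. u \<in> hom C (Cod C e) (Cod C h) \<and> u \<cdot> e = h"
  unfolding is_coequalizer_def by blast

lemma coequalizer_descE:
  assumes "is_coequalizer C e a b" "h \<in> Arr C" "Dom C h = Cod C a" "h \<cdot> a = h \<cdot> b"
  obtains u where "u \<in> Arr C" "Dom C u = Cod C e" "Cod C u = Cod C h" "u \<cdot> e = h"
  using coequalizer_universal[OF assms] homD by blast

lemma coequalizer_epi:
  assumes E: "is_coequalizer C e a b" and "u \<in> Arr C" "w \<in> Arr C" "Dom C u = Cod C e"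
    "Dom C w = Cod C e" "Cod C u = Cod C w" "u \<cdot> e = w \<cdot> e"
  shows "u = w"
proof -
  note D = coequalizerD[OF E]
  have "(u \<cdot> e) \<cdot> a = (u \<cdot> e) \<cdot> b"
    using comp_assoc[of a e u] comp_assoc[of b e u] D assms by simp
  then have "\<exists>!v. v \<in> hom C (Cod C e) (Cod C u) \<and> v \<cdot> e = u \<cdot> e"
    using coequalizer_universal[OF E, of "u \<cdot> e"] D assms by simp
  then show "u = w" by (rule ex1_uniq) (use assms homI in auto)
qed

lemma factors_through_cancel_coequalizer:
  assumes E: "is_coequalizer C e a b" and m: "mono C m"
    and t: "t \<in> Arr C" "Dom C t = Cod C e" and "factors_through (t \<cdot> e) m"
  shows "factors_through t m"
proof -
  note D = coequalizerD[OF E]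
  obtain s where s: "s \<in> Arr C" "Dom C s = Dom C (t \<cdot> e)" "Cod C s = Dom C m" "m \<cdot> s = t \<cdot> e"
    by (rule factors_throughE[OF assms(5)])
  have s_dom: "Dom C s = Dom C e" using s D t by simp
  have ma: "m \<in> Arr C" using mono_arr[OF m] .
  have "m \<cdot> (s \<cdot> a) = t \<cdot> (e \<cdot> a)"
    by (rule comp_square) (use s D t ma in simp_all)
  also have "\<dots> = t \<cdot> (e \<cdot> b)" using D by simp
  also have "\<dots> = m \<cdot> (s \<cdot> b)" by (rule comp_square) (use s D t ma in simp_all)
  finally
  have "s \<cdot> a = s \<cdot> b" using mono_cancel[OF m] s s_dom D ma by simp
  then obtain d where d: "d \<in> Arr C" "Dom C d = Cod C e" "Cod C d = Dom C m" "d \<cdot> e = s"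
    using coequalizer_descE[OF E s(1)] s_dom s D by auto
  have "Cod C m = Cod C (m \<cdot> s)" using s(1,3) ma by simp
  then have "Cod C m = Cod C t" using s(4) D t by simp
  moreover have "(m \<cdot> d) \<cdot> e = t \<cdot> e" using comp_reduce'[of e d m s] d s D ma by simp
  ultimately have "m \<cdot> d = t" using coequalizer_epi[OF E, of "m \<cdot> d" t] d t ma by simp
  then show ?thesis using d t by (intro factors_throughI) auto
qed

lemma pushout_universal:
  "\<lbrakk>is_pushout C f g p1 p2; q1 \<in> Arr C; q2 \<in> Arr C; Cod C q1 = Cod C q2;
    Dom C q1 = Cod C f; Dom C q2 = Cod C g; q1 \<cdot> f = q2 \<cdot> g\<rbrakk>
     \<Longrightarrow> \<exists>!h. h \<in> hom C (Cod C p1) (Cod C q1) \<and> h \<cdot> p1 = q1 \<and> h \<cdot> p2 = q2"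
  unfolding is_pushout_def by blast

lemma pushoutD:
  "is_pushout C f g p1 p2 \<Longrightarrow> f \<in> Arr C \<and> g \<in> Arr C \<and> p1 \<in> Arr C \<and> p2 \<in> Arr C \<and>
     Dom C f = Dom C g \<and> Cod C p1 = Cod C p2 \<and> Dom C p1 = Cod C f \<and> Dom C p2 = Cod C g \<and>
     p1 \<cdot> f = p2 \<cdot> g"
  unfolding is_pushout_def by blast

lemma kernel_exists:
  assumes f: "f \<in> Arr C" and "finitely_complete C"
  shows "\<exists>k. is_kernel C k f"
proof -
  let ?b = "Cod C f"
  have I: "from_zero ?b \<in> Arr C" "Dom C (from_zero ?b) = z" "Cod C (from_zero ?b) = ?b"
    using from_zero f cod_obj by auto
  have "\<exists>p1 p2. is_pullback C f (from_zero ?b) p1 p2"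
    using assms(2) f I unfolding finitely_complete_def by simp
  then obtain p1 p2 where P: "is_pullback C f (from_zero ?b) p1 p2" by blast
  note D = pullbackD[OF P]
  have p2: "p2 = to_zero (Dom C p1)" by (rule to_zero_unique) (use D I in simp_all)
  show ?thesis
  proof (rule exI[of _ p1], rule kernelI)
    show "f \<cdot> p1 = zero (Dom C p1) (Cod C f)" unfolding zero_def using D p2 by simp
    show "mono C p1" unfolding mono_def
    proof (intro conjI ballI impI)
      fix u w assume u: "u \<in> Arr C" "w \<in> Arr C" "Dom C u = Dom C w" "Cod C u = Dom C p1"
        "Cod C w = Dom C p1" "p1 \<cdot> u = p1 \<cdot> w"
      have "p2 \<cdot> u = to_zero (Dom C u)" "p2 \<cdot> w = to_zero (Dom C u)"
        by (rule to_zero_unique; use D I u in simp)+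
      then show "u = w" using pullback_eqI[OF P, of u w] u by simp
    qed (use D in blast)
    fix g assume g: "g \<in> Arr C" "Cod C g = Dom C f" "f \<cdot> g = zero (Dom C g) (Cod C f)"
    have T: "to_zero (Dom C g) \<in> Arr C" "Dom C (to_zero (Dom C g)) = Dom C g"
      "Cod C (to_zero (Dom C g)) = z"
      using to_zero g dom_obj by auto
    have "f \<cdot> g = from_zero ?b \<cdot> to_zero (Dom C g)" using g(3) unfolding zero_def .
    then obtain h where "h \<in> Arr C" "Dom C h = Dom C g" "Cod C h = Dom C p1" "p1 \<cdot> h = g"
      using pullback_liftE[OF P g(1) T(1)] g T I by auto
    then show "factors_through g p1" by (rule factors_throughI)
  qed (use D in simp_all)
qed

lemma cokernel_exists:
  assumes k: "k \<in> Arr C" and "finitely_cocomplete C"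
  shows "\<exists>q. is_cokernel C q k"
proof -
  let ?a = "Dom C k"
  have T: "to_zero ?a \<in> Arr C" "Dom C (to_zero ?a) = ?a" "Cod C (to_zero ?a) = z"
    using to_zero k dom_obj by auto
  have "\<exists>p1 p2. is_pushout C k (to_zero ?a) p1 p2"
    using assms(2) k T unfolding finitely_cocomplete_def by simp
  then obtain p1 p2 where P: "is_pushout C k (to_zero ?a) p1 p2" by blast
  note D = pushoutD[OF P]
  have p2: "p2 = from_zero (Cod C p1)" by (rule from_zero_unique) (use D T in simp_all)
  show ?thesis
  proof (rule exI[of _ p1], rule cokernelI)
    show "p1 \<cdot> k = zero (Dom C k) (Cod C p1)" unfolding zero_def using D p2 by simp
  next
    fix u w assume u: "u \<in> Arr C" "w \<in> Arr C" "Dom C u = Cod C p1" "Dom C w = Cod C p1"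
      "Cod C u = Cod C w" "u \<cdot> p1 = w \<cdot> p1"
    have up2: "u \<cdot> p2 = from_zero (Cod C u)" and wp2: "w \<cdot> p2 = from_zero (Cod C u)"
      by (rule from_zero_unique; use D u T in simp)+
    have "(u \<cdot> p1) \<cdot> k = (u \<cdot> p2) \<cdot> to_zero ?a"
      using comp_assoc[of k p1 u] comp_assoc[of "to_zero ?a" p2 u] D u T by simp
    then have "\<exists>!h. h \<in> hom C (Cod C p1) (Cod C (u \<cdot> p1)) \<and> h \<cdot> p1 = u \<cdot> p1 \<and> h \<cdot> p2 = u \<cdot> p2"
      using pushout_universal[OF P, of "u \<cdot> p1" "u \<cdot> p2"] D u(1-5) T by simp
    then show "u = w" by (rule ex1_uniq) (use D u up2 wp2 homI in auto)
  next
    fix g assume g: "g \<in> Arr C" "Dom C g = Cod C k" "g \<cdot> k = zero (Dom C k) (Cod C g)"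
    have I: "from_zero (Cod C g) \<in> Arr C" "Dom C (from_zero (Cod C g)) = z"
      "Cod C (from_zero (Cod C g)) = Cod C g"
      using from_zero g cod_obj by auto
    have "g \<cdot> k = from_zero (Cod C g) \<cdot> to_zero ?a" using g(3) unfolding zero_def .
    then have "\<exists>h. h \<in> hom C (Cod C p1) (Cod C g) \<and> h \<cdot> p1 = g"
      using pushout_universal[OF P g(1) I(1)] g I T by auto
    then show "\<exists>h. h \<in> Arr C \<and> Dom C h = Cod C p1 \<and> Cod C h = Cod C g \<and> h \<cdot> p1 = g"
      using homD by blast
  qed (use D in simp_all)
qed

lemma A3_limitD:
  assumes "is_A3_limit C qx qy L l1 l2 l3"
  shows "qx \<in> Arr C" "qy \<in> Arr C" "Dom C qy = Dom C qx"
    and "l1 \<in> Arr C" "l2 \<in> Arr C" "l3 \<in> Arr C" "Dom C l1 = L" "Dom C l2 = L" "Dom C l3 = L"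
    and "Cod C l1 = Dom C qx" "Cod C l2 = Dom C qx" "Cod C l3 = Dom C qx"
    and "qx \<cdot> l1 = qx \<cdot> l2" "qy \<cdot> l2 = qy \<cdot> l3"
  using assms unfolding is_A3_limit_def hom_def by auto

lemma A3_limit_swap:
  "is_A3_limit C qx qy L l1 l2 l3 \<Longrightarrow> is_A3_limit C qy qx L l3 l2 l1"
  unfolding is_A3_limit_def by (metis (no_types, lifting))

lemma A3_liftE:
  assumes L: "is_A3_limit C qx qy L l1 l2 l3"
    and m: "m1 \<in> hom C T (Dom C qx)" "m2 \<in> hom C T (Dom C qx)" "m3 \<in> hom C T (Dom C qx)"
    and "qx \<cdot> m1 = qx \<cdot> m2" "qy \<cdot> m2 = qy \<cdot> m3"
  obtains h where "h \<in> Arr C" "Dom C h = T" "Cod C h = L" "l1 \<cdot> h = m1" "l2 \<cdot> h = m2" "l3 \<cdot> h = m3"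
proof -
  have "\<exists>!h. h \<in> hom C T L \<and> l1 \<cdot> h = m1 \<and> l2 \<cdot> h = m2 \<and> l3 \<cdot> h = m3"
    using assms unfolding is_A3_limit_def by blast
  then show ?thesis using that homD by blast
qed

lemma A3_eqI:
  assumes L: "is_A3_limit C qx qy L l1 l2 l3"
    and h: "h \<in> Arr C" "h' \<in> Arr C" "Dom C h' = Dom C h" "Cod C h = L" "Cod C h' = L"
    and "l1 \<cdot> h = l1 \<cdot> h'" "l2 \<cdot> h = l2 \<cdot> h'" "l3 \<cdot> h = l3 \<cdot> h'"
  shows "h = h'"
proof -
  note D = A3_limitD[OF L]
  have "qx \<cdot> (l1 \<cdot> h) = qx \<cdot> (l2 \<cdot> h)" "qy \<cdot> (l2 \<cdot> h) = qy \<cdot> (l3 \<cdot> h)"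
    by (rule comp_square; use D h in simp)+
  moreover have "l1 \<cdot> h \<in> hom C (Dom C h) (Dom C qx)" "l2 \<cdot> h \<in> hom C (Dom C h) (Dom C qx)"
    "l3 \<cdot> h \<in> hom C (Dom C h) (Dom C qx)"
    using D h homI by auto
  ultimately have "\<exists>!k. k \<in> hom C (Dom C h) L \<and> l1 \<cdot> k = l1 \<cdot> h \<and> l2 \<cdot> k = l2 \<cdot> h \<and> l3 \<cdot> k = l3 \<cdot> h"
    using L unfolding is_A3_limit_def by blast
  then show ?thesis by (rule ex1_uniq) (use assms homI in auto)
qed

end

locale homological_cat = pointed_cat +
  assumes homological: "homological C" and finitely_cocomplete: "finitely_cocomplete C"
begin

lemma finitely_complete: "finitely_complete C"
  using homological unfolding homological_def regular_category_def by blast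

lemma pullback_exists: "f \<in> Arr C \<Longrightarrow> g \<in> Arr C \<Longrightarrow> Cod C f = Cod C g \<Longrightarrow> \<exists>p1 p2. is_pullback C f g p1 p2"
  using finitely_complete unfolding finitely_complete_def by blast

lemma regular_epi_mono_factorization:
  "f \<in> Arr C \<Longrightarrow> \<exists>e m. regular_epi C e \<and> mono C m \<and> Cod C e = Dom C m \<and> f = m \<cdot> e"
  using homological unfolding homological_def regular_category_def by blast

text \<open>Equalizers, built from pullbacks: the pullback of the graphs of u and w.\<close>
lemma equalizer_exists:
  assumes u: "u \<in> Arr C" "w \<in> Arr C" "Dom C u = Dom C w" "Cod C u = Cod C w"
  obtains e where "e \<in> Arr C" "Cod C e = Dom C u" "mono C e" "u \<cdot> e = w \<cdot> e"
    "\<And>h. h \<in> Arr C \<Longrightarrow> Cod C h = Dom C u \<Longrightarrow> u \<cdot> h = w \<cdot> h \<Longrightarrow> factors_through h e"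
proof -
  define R where "R = Dom C u"
  define Z where "Z = Cod C u"
  have RZ: "R \<in> Obj C" "Z \<in> Obj C" using u dom_obj cod_obj unfolding R_def Z_def by auto
  have TR: "to_zero R \<in> Arr C" "Dom C (to_zero R) = R" "Cod C (to_zero R) = z"
    using to_zero[OF RZ(1)] by auto
  have TZ: "to_zero Z \<in> Arr C" "Dom C (to_zero Z) = Z" "Cod C (to_zero Z) = z"
    using to_zero[OF RZ(2)] by auto
  obtain \<pi>1 \<pi>2 where P: "is_pullback C (to_zero R) (to_zero Z) \<pi>1 \<pi>2"
    using pullback_exists[OF TR(1) TZ(1)] TR TZ by auto
  note PD = pullbackD[OF P]
  have graph: "\<exists>h. h \<in> Arr C \<and> Dom C h = R \<and> Cod C h = Dom C \<pi>1 \<and> \<pi>1 \<cdot> h = Idt C R \<and> \<pi>2 \<cdot> h = v"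
    if v: "v \<in> Arr C" "Dom C v = R" "Cod C v = Z" for v
  proof -
    have "to_zero Z \<cdot> v = to_zero R" by (rule to_zero_unique) (use TZ v in simp_all)
    then have "to_zero R \<cdot> Idt C R = to_zero Z \<cdot> v" using TR by simp
    then obtain h where "h \<in> Arr C" "Dom C h = R" "Cod C h = Dom C \<pi>1" "\<pi>1 \<cdot> h = Idt C R"
      "\<pi>2 \<cdot> h = v"
      using pullback_liftE[OF P, of "Idt C R" v] RZ TR TZ v by auto
    then show ?thesis by blast
  qed
  obtain \<alpha> where \<alpha>: "\<alpha> \<in> Arr C" "Dom C \<alpha> = R" "Cod C \<alpha> = Dom C \<pi>1" "\<pi>1 \<cdot> \<alpha> = Idt C R" "\<pi>2 \<cdot> \<alpha> = u"
    using graph[of u] u unfolding R_def Z_def by blast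
  obtain \<beta> where \<beta>: "\<beta> \<in> Arr C" "Dom C \<beta> = R" "Cod C \<beta> = Dom C \<pi>1" "\<pi>1 \<cdot> \<beta> = Idt C R" "\<pi>2 \<cdot> \<beta> = w"
    using graph[of w] u unfolding R_def Z_def by auto
  obtain e1 e2 where E: "is_pullback C \<alpha> \<beta> e1 e2" using pullback_exists[OF \<alpha>(1) \<beta>(1)] \<alpha> \<beta> by auto
  note ED = pullbackD[OF E]
  have "e1 = \<pi>1 \<cdot> (\<alpha> \<cdot> e1)" using comp_reduce[of e1 \<alpha> \<pi>1] \<alpha> ED RZ PD by simp
  also have "\<dots> = \<pi>1 \<cdot> (\<beta> \<cdot> e2)" using ED by simp
  also have "\<dots> = e2" using comp_reduce[of e2 \<beta> \<pi>1] \<beta> ED RZ PD by simp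
  finally have e12: "e1 = e2" .
  have "u \<cdot> e1 = \<pi>2 \<cdot> (\<alpha> \<cdot> e1)" using comp_reduce[of e1 \<alpha> \<pi>2] \<alpha> ED PD by simp
  also have "\<dots> = \<pi>2 \<cdot> (\<beta> \<cdot> e2)" using ED by simp
  also have "\<dots> = w \<cdot> e1" using comp_reduce[of e2 \<beta> \<pi>2] \<beta> ED PD e12 by simp
  finally have ue: "u \<cdot> e1 = w \<cdot> e1" .
  have "mono C e1" using pullback_mono[OF E split_mono[of \<beta> \<pi>1]] \<beta> PD by simp
  moreover have "factors_through h e1" if h: "h \<in> Arr C" "Cod C h = Dom C u" "u \<cdot> h = w \<cdot> h" for h
  proof -
    have "\<pi>1 \<cdot> (\<alpha> \<cdot> h) = \<pi>1 \<cdot> (\<beta> \<cdot> h)" "\<pi>2 \<cdot> (\<alpha> \<cdot> h) = \<pi>2 \<cdot> (\<beta> \<cdot> h)"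
      using comp_reduce[of h _ \<pi>1] comp_reduce[of h _ \<pi>2] \<alpha> \<beta> PD h R_def by simp_all
    then have "\<alpha> \<cdot> h = \<beta> \<cdot> h" using pullback_eqI[OF P, of "\<alpha> \<cdot> h" "\<beta> \<cdot> h"] \<alpha> \<beta> h R_def by simp
    then obtain h' where "h' \<in> Arr C" "Dom C h' = Dom C h" "Cod C h' = Dom C e1" "e1 \<cdot> h' = h"
      using pullback_liftE[OF E h(1) h(1)] \<alpha> \<beta> h R_def by auto
    then show ?thesis by (rule factors_throughI)
  qed
  ultimately show ?thesis by (intro that[of e1]) (use ED \<alpha> ue R_def in auto)
qed

text \<open>This is where the Split Short Five Lemma enters: m is compared with the identity of
  the split extension through the restricted extension p m.\<close>
lemma split_extension_mono_iso:
  assumes s: "section_of s p" and k: "is_kernel C k p" and m: "mono C m" "Cod C m = Dom C p"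
    and "factors_through s m" "factors_through k m"
  shows "iso C m"
proof -
  note S = section_ofD[OF s] and K = kernelD[OF k]
  have ma: "m \<in> Arr C" using mono_arr[OF m(1)] .
  obtain s' where s': "s' \<in> Arr C" "Dom C s' = Dom C s" "Cod C s' = Dom C m" "m \<cdot> s' = s"
    by (rule factors_throughE[OF assms(5)])
  obtain k' where k': "k' \<in> Arr C" "Dom C k' = Dom C k" "Cod C k' = Dom C m" "m \<cdot> k' = k"
    by (rule factors_throughE[OF assms(6)])
  have objs: "Dom C k \<in> Obj C" "Cod C p \<in> Obj C" using K S dom_obj cod_obj by auto
  have pm: "p \<cdot> m \<in> Arr C" "Dom C (p \<cdot> m) = Dom C m" "Cod C (p \<cdot> m) = Cod C p" using S ma m by auto
  have k'_kernel: "is_kernel C k' (p \<cdot> m)"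
  proof (rule kernelI)
    have "(p \<cdot> m) \<cdot> k' = p \<cdot> k" by (rule comp_reduce') (use S ma m k' in simp_all)
    then show "(p \<cdot> m) \<cdot> k' = zero (Dom C k') (Cod C (p \<cdot> m))" using K k' pm by simp
    show "mono C k'" unfolding mono_def
    proof (intro conjI ballI impI)
      fix u w assume u: "u \<in> Arr C" "w \<in> Arr C" "Dom C u = Dom C w" "Cod C u = Dom C k'"
        "Cod C w = Dom C k'" "k' \<cdot> u = k' \<cdot> w"
      have "k \<cdot> u = m \<cdot> (k' \<cdot> u)" by (rule sym, rule comp_reduce) (use u k' ma in simp_all)
      also have "\<dots> = m \<cdot> (k' \<cdot> w)" using u(6) by simp
      also have "\<dots> = k \<cdot> w" by (rule comp_reduce) (use u k' ma in simp_all)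
      finally show "u = w" using mono_cancel[OF kernel_mono[OF k], of u w] u k' by simp
    qed (rule k')
    fix g assume g: "g \<in> Arr C" "Cod C g = Dom C (p \<cdot> m)"
      "(p \<cdot> m) \<cdot> g = zero (Dom C g) (Cod C (p \<cdot> m))"
    have "p \<cdot> (m \<cdot> g) = zero (Dom C (m \<cdot> g)) (Cod C p)"
      using comp_assoc[of g m p] g pm ma m S by simp
    then obtain h where h: "h \<in> Arr C" "Dom C h = Dom C (m \<cdot> g)" "Cod C h = Dom C k" "k \<cdot> h = m \<cdot> g"
      using kernel_liftE[OF k, of "m \<cdot> g"] g pm ma m by auto
    have "m \<cdot> (k' \<cdot> h) = k \<cdot> h" by (rule comp_reduce) (use h k' ma in simp_all)
    then have "k' \<cdot> h = g" using mono_cancel[OF m(1), of "k' \<cdot> h" g] h k' g pm ma by simp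
    then show "factors_through g k'" using h k' g pm ma by (intro factors_throughI[of h]) simp_all
  qed (use k' pm in simp_all)
  have ssfl: "split_short_five_lemma C" using homological unfolding homological_def by blast
  show "iso C m"
  proof (rule ssfl[unfolded split_short_five_lemma_def, rule_format,
        of "p \<cdot> m" s' k' p s k "Idt C (Dom C k)" m "Idt C (Cod C p)"])
    show "(p \<cdot> m) \<cdot> s' = Idt C (Cod C (p \<cdot> m))"
      using comp_reduce'[of s' m p s] S ma m s' pm by simp
  qed (use k'_kernel pm s' S k k' K ma m objs id_iso homI in simp_all)
qed

lemma split_extension_jointly_epic:
  assumes s: "section_of s p" and k: "is_kernel C k p"
    and u: "u \<in> Arr C" "w \<in> Arr C" "Dom C u = Dom C p" "Dom C w = Dom C p" "Cod C u = Cod C w"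
    and "u \<cdot> s = w \<cdot> s" "u \<cdot> k = w \<cdot> k"
  shows "u = w"
proof -
  note S = section_ofD[OF s] and K = kernelD[OF k]
  obtain e where e: "e \<in> Arr C" "Cod C e = Dom C u" "mono C e" "u \<cdot> e = w \<cdot> e"
    and e_univ: "\<And>h. h \<in> Arr C \<Longrightarrow> Cod C h = Dom C u \<Longrightarrow> u \<cdot> h = w \<cdot> h \<Longrightarrow> factors_through h e"
    by (rule equalizer_exists[OF u(1-2)]) (use u(3-5) in simp_all)
  have "iso C e"
    using split_extension_mono_iso[OF s k e(3)] e_univ[of s] e_univ[of k] S K e assms by simp
  then show "u = w" using iso_cancel_right[of e u w] u e by simp
qed

text \<open>Pull m back along f; the pulled-back mono contains the section and the kernel, so it
  is invertible.\<close>
lemma split_extension_factors_through: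
  assumes s: "section_of s p" and k: "is_kernel C k p"
    and f: "f \<in> Arr C" "Dom C f = Dom C p" and m: "mono C m" "Cod C m = Cod C f"
    and "factors_through (f \<cdot> s) m" "factors_through (f \<cdot> k) m"
  shows "factors_through f m"
proof -
  note S = section_ofD[OF s] and K = kernelD[OF k]
  have ma: "m \<in> Arr C" using mono_arr[OF m(1)] .
  obtain n1 n2 where N: "is_pullback C f m n1 n2" using pullback_exists[OF f(1) ma] m by auto
  note ND = pullbackD[OF N]
  have lift: "factors_through t n1" if t: "t \<in> Arr C" "Cod C t = Dom C p"
    "factors_through (f \<cdot> t) m" for t
  proof -
    obtain d where d: "d \<in> Arr C" "Dom C d = Dom C (f \<cdot> t)" "Cod C d = Dom C m" "m \<cdot> d = f \<cdot> t"
      by (rule factors_throughE[OF t(3)])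
    then obtain h where "h \<in> Arr C" "Dom C h = Dom C t" "Cod C h = Dom C n1" "n1 \<cdot> h = t"
      using pullback_liftE[OF N t(1) d(1)] t f ND by auto
    then show ?thesis by (rule factors_throughI)
  qed
  have "iso C n1"
    using split_extension_mono_iso[OF s k pullback_mono[OF N m(1)]] lift S K ND f assms(7,8) by simp
  then obtain i where i: "i \<in> Arr C" "Dom C i = Cod C n1" "Cod C i = Dom C n1"
    "n1 \<cdot> i = Idt C (Cod C n1)"
    using isoE by blast
  have "f = f \<cdot> (n1 \<cdot> i)" using i ND f by simp
  also have "\<dots> = m \<cdot> (n2 \<cdot> i)" by (rule comp_square) (use i ND in simp_all)
  finally show ?thesis using i ND by (intro factors_throughI[of "n2 \<cdot> i"]) simp_all
qed

text \<open>The diagonal splits p1, and q p1, q p2 agree on it and on the kernel of p1, since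
  p2 maps that kernel into the kernel of f.\<close>
lemma cokernel_of_kernel_coequalizes_kernel_pair:
  assumes k: "is_kernel C k f" and q: "is_cokernel C q k" and P: "is_pullback C f f p1 p2"
  shows "q \<cdot> p1 = q \<cdot> p2"
proof -
  note K = kernelD[OF k] and Q = cokernelD[OF q] and PD = pullbackD[OF P]
  define A where "A = Dom C f"
  have A: "A \<in> Obj C" using K dom_obj unfolding A_def by blast
  obtain \<delta> where \<delta>: "\<delta> \<in> Arr C" "Dom C \<delta> = A" "Cod C \<delta> = Dom C p1" "p1 \<cdot> \<delta> = Idt C A"
    "p2 \<cdot> \<delta> = Idt C A"
    using pullback_liftE[OF P, of "Idt C A" "Idt C A"] A PD unfolding A_def by auto
  have s: "section_of \<delta> p1" using \<delta> PD A_def unfolding section_of_def hom_def by auto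
  obtain k1 where k1: "is_kernel C k1 p1" using kernel_exists[of p1] PD finitely_complete by blast
  note K1 = kernelD[OF k1]
  have objs: "Dom C k1 \<in> Obj C" "Cod C f \<in> Obj C" "Cod C q \<in> Obj C"
    using K1 K Q dom_obj cod_obj by auto
  have "f \<cdot> (p2 \<cdot> k1) = f \<cdot> (p1 \<cdot> k1)" by (rule comp_square) (use PD K1 in simp_all)
  also have "\<dots> = zero (Dom C (p2 \<cdot> k1)) (Cod C f)" using K1 PD objs by simp
  finally obtain t where t: "t \<in> Arr C" "Dom C t = Dom C k1" "Cod C t = Dom C k" "k \<cdot> t = p2 \<cdot> k1"
    using kernel_liftE[OF k, of "p2 \<cdot> k1"] PD K1 K by auto
  have "(q \<cdot> p2) \<cdot> k1 = (q \<cdot> k) \<cdot> t"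
    using comp_reduce'[of k1 p2 q] comp_assoc[of t k q] PD K1 Q t K by simp
  also have "\<dots> = (q \<cdot> p1) \<cdot> k1" using comp_assoc[of k1 p1 q] PD K1 K Q t objs by simp
  finally have "(q \<cdot> p1) \<cdot> k1 = (q \<cdot> p2) \<cdot> k1" ..
  moreover have "(q \<cdot> p1) \<cdot> \<delta> = (q \<cdot> p2) \<cdot> \<delta>"
    using comp_reduce'[of \<delta> p1 q] comp_reduce'[of \<delta> p2 q] PD \<delta> Q K A_def by simp
  ultimately show ?thesis
    using split_extension_jointly_epic[OF s k1, of "q \<cdot> p1" "q \<cdot> p2"] PD Q K A_def by simp
qed

lemma regular_epi_normal_epi:
  assumes "regular_epi C f"
  shows "normal_epi C f"
proof -
  obtain a b where E: "is_coequalizer C f a b" using assms unfolding regular_epi_def by blast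
  note ED = coequalizerD[OF E]
  obtain k where k: "is_kernel C k f" using kernel_exists[of f] ED finitely_complete by blast
  note K = kernelD[OF k]
  obtain q where q: "is_cokernel C q k" using cokernel_exists[of k] K finitely_cocomplete by blast
  note Q = cokernelD[OF q]
  obtain p1 p2 where P: "is_pullback C f f p1 p2" using pullback_exists[of f f] ED by blast
  note PD = pullbackD[OF P]
  obtain t where t: "t \<in> Arr C" "Dom C t = Dom C a" "Cod C t = Dom C p1" "p1 \<cdot> t = a" "p2 \<cdot> t = b"
    by (rule pullback_liftE[OF P, of a b]) (use ED in simp_all)
  have "q \<cdot> a = (q \<cdot> p1) \<cdot> t" using comp_reduce'[of t p1 q a] t PD Q K by simp
  also have "\<dots> = (q \<cdot> p2) \<cdot> t"
    using cokernel_of_kernel_coequalizes_kernel_pair[OF k q P] by simp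
  also have "\<dots> = q \<cdot> b" using comp_reduce'[of t p2 q b] t PD Q K by simp
  finally have "q \<cdot> a = q \<cdot> b" .
  moreover have "Dom C q = Cod C a" using Q K ED by simp
  ultimately obtain w where w: "w \<in> Arr C" "Dom C w = Cod C f" "Cod C w = Cod C q" "w \<cdot> f = q"
    using coequalizer_descE[OF E] Q by metis
  have "is_cokernel C f k"
  proof (rule cokernelI)
    fix u w assume "u \<in> Arr C" "w \<in> Arr C" "Dom C u = Cod C f" "Dom C w = Cod C f"
      "Cod C u = Cod C w" "u \<cdot> f = w \<cdot> f"
    then show "u = w" by (rule coequalizer_epi[OF E])
  next
    fix g assume g: "g \<in> Arr C" "Dom C g = Cod C k" "g \<cdot> k = zero (Dom C k) (Cod C g)"
    obtain h where h: "h \<in> Arr C" "Dom C h = Cod C q" "Cod C h = Cod C g" "h \<cdot> q = g"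
      by (rule cokernel_descE[OF q g])
    have "(h \<cdot> w) \<cdot> f = g" using comp_reduce'[of f w h q] h w ED by simp
    then show "\<exists>h. h \<in> Arr C \<and> Dom C h = Cod C f \<and> Cod C h = Cod C g \<and> h \<cdot> f = g"
      using h w by (intro exI[of _ "h \<cdot> w"]) simp
  qed (use K in simp_all)
  then show ?thesis unfolding normal_epi_def by blast
qed

lemma iso_comp_cokernel:
  assumes q: "is_cokernel C e k" and m: "iso C m" "Dom C m = Cod C e"
  shows "is_cokernel C (m \<cdot> e) k"
proof -
  note E = cokernelD[OF q]
  have ma: "m \<in> Arr C" using iso_arr[OF m(1)] .
  obtain i where i: "i \<in> Arr C" "Dom C i = Cod C m" "Cod C i = Dom C m" "i \<cdot> m = Idt C (Dom C m)"
    using isoE[OF m(1)] by blast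
  have objs: "Dom C k \<in> Obj C" "Cod C m \<in> Obj C" using E ma dom_obj cod_obj by auto
  show ?thesis
  proof (rule cokernelI)
    have "(m \<cdot> e) \<cdot> k = m \<cdot> zero (Dom C k) (Cod C e)"
      by (rule comp_reduce') (use E ma m in simp_all)
    then show "(m \<cdot> e) \<cdot> k = zero (Dom C k) (Cod C (m \<cdot> e))" using E ma m objs by simp
  next
    fix u w assume u: "u \<in> Arr C" "w \<in> Arr C" "Dom C u = Cod C (m \<cdot> e)" "Dom C w = Cod C (m \<cdot> e)"
      "Cod C u = Cod C w" "u \<cdot> (m \<cdot> e) = w \<cdot> (m \<cdot> e)"
    have "(u \<cdot> m) \<cdot> e = (w \<cdot> m) \<cdot> e"
      using comp_assoc[of e m u] comp_assoc[of e m w] u E ma m by simp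
    then have "u \<cdot> m = w \<cdot> m" using cokernel_epi[OF q, of "u \<cdot> m" "w \<cdot> m"] u ma m E by simp
    then show "u = w" using iso_cancel_right[OF m(1), of u w] u ma m E by simp
  next
    fix g assume g: "g \<in> Arr C" "Dom C g = Cod C k" "g \<cdot> k = zero (Dom C k) (Cod C g)"
    obtain h where h: "h \<in> Arr C" "Dom C h = Cod C e" "Cod C h = Cod C g" "h \<cdot> e = g"
      by (rule cokernel_descE[OF q g])
    have "(h \<cdot> i) \<cdot> (m \<cdot> e) = h \<cdot> ((i \<cdot> m) \<cdot> e)"
      using comp_assoc[of "m \<cdot> e" i h] comp_assoc[of e m i] h i E ma m by simp
    then have "(h \<cdot> i) \<cdot> (m \<cdot> e) = g" using h i E m by simp
    then show "\<exists>h'. h' \<in> Arr C \<and> Dom C h' = Cod C (m \<cdot> e) \<and> Cod C h' = Cod C g \<and> h' \<cdot> (m \<cdot> e) = g"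
      using h i E ma m by (intro exI[of _ "h \<cdot> i"]) simp
  qed (use E ma m in simp_all)
qed

lemma image_kernel_of_cokernel:
  assumes ex: "regular_epi C ex" and mx: "mono C mx" "normal_mono C mx" "Cod C ex = Dom C mx"
    and q: "is_cokernel C q (mx \<cdot> ex)"
  shows "is_kernel C mx q"
proof -
  obtain a b where E: "is_coequalizer C ex a b" using ex unfolding regular_epi_def by blast
  have exa: "ex \<in> Arr C" using coequalizerD[OF E] by blast
  have ma: "mx \<in> Arr C" using mono_arr[OF mx(1)] .
  obtain f where f: "is_kernel C mx f" using mx(2) unfolding normal_mono_def by blast
  note F = kernelD[OF f]
  have Q: "q \<in> Arr C" "Dom C q = Cod C mx" "q \<cdot> (mx \<cdot> ex) = zero (Dom C ex) (Cod C q)"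
    using cokernelD[OF q] exa ma mx by auto
  have objs: "Dom C mx \<in> Obj C" "Dom C ex \<in> Obj C" "Cod C q \<in> Obj C" "Cod C f \<in> Obj C"
    using ma exa Q F dom_obj cod_obj by auto
  show ?thesis
  proof (rule kernelI)
    have "(q \<cdot> mx) \<cdot> ex = zero (Dom C mx) (Cod C q) \<cdot> ex"
      using comp_assoc[of ex mx q] exa ma Q objs mx by simp
    then show "q \<cdot> mx = zero (Dom C mx) (Cod C q)"
      using coequalizer_epi[OF E, of "q \<cdot> mx" "zero (Dom C mx) (Cod C q)"] exa ma Q objs mx by simp
  next
    fix g assume g: "g \<in> Arr C" "Cod C g = Dom C q" "q \<cdot> g = zero (Dom C g) (Cod C q)"
    have "f \<cdot> (mx \<cdot> ex) = zero (Dom C (mx \<cdot> ex)) (Cod C f)"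
      using comp_assoc[of ex mx f] exa ma F objs mx by simp
    then obtain f' where f': "f' \<in> Arr C" "Dom C f' = Cod C q" "Cod C f' = Cod C f" "f' \<cdot> q = f"
      using cokernel_descE[OF q, of f] exa ma mx F by auto
    have "f \<cdot> g = f' \<cdot> (q \<cdot> g)" by (rule sym, rule comp_reduce) (use f' g Q in simp_all)
    then have "f \<cdot> g = zero (Dom C g) (Cod C f)" using g f' dom_obj by simp
    then obtain h where "h \<in> Arr C" "Dom C h = Dom C g" "Cod C h = Dom C mx" "mx \<cdot> h = g"
      using kernel_liftE[OF f g(1)] g F Q by auto
    then show "factors_through g mx" by (rule factors_throughI)
  qed (use ma Q mx in simp_all)
qed

text \<open>Here t = (mx,0,0) ex, and the regular epimorphism ex is orthogonal to m.\<close>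
lemma A3_kernel_part_factors_through:
  assumes L: "is_A3_limit C qx qy L l1 l2 l3" and kx: "is_kernel C mx qx"
    and E: "is_coequalizer C ex a b" "Cod C ex = Dom C mx" and m: "mono C m"
    and t: "t \<in> Arr C" "Dom C t = Dom C ex" "Cod C t = L" "l1 \<cdot> t = mx \<cdot> ex"
      "l2 \<cdot> t = zero (Dom C ex) (Dom C qx)" "l3 \<cdot> t = zero (Dom C ex) (Dom C qx)"
      "factors_through t m"
  obtains j where "j \<in> Arr C" "Dom C j = Dom C mx" "Cod C j = L" "l1 \<cdot> j = mx"
    "l2 \<cdot> j = zero (Dom C mx) (Dom C qx)" "l3 \<cdot> j = zero (Dom C mx) (Dom C qx)"
    "factors_through j m"
proof -
  note D = A3_limitD[OF L] and K = kernelD[OF kx] and ED = coequalizerD[OF E(1)]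
  define Z where "Z = zero (Dom C mx) (Dom C qx)"
  have objs: "Dom C mx \<in> Obj C" "Dom C qx \<in> Obj C" "Dom C ex \<in> Obj C" "Cod C qx \<in> Obj C"
    using K D ED dom_obj cod_obj by auto
  have "qx \<cdot> mx = qx \<cdot> Z" "qy \<cdot> Z = qy \<cdot> Z" using K D objs Z_def by simp_all
  then obtain j where j: "j \<in> Arr C" "Dom C j = Dom C mx" "Cod C j = L" "l1 \<cdot> j = mx" "l2 \<cdot> j = Z"
    "l3 \<cdot> j = Z"
    using A3_liftE[OF L, of mx "Dom C mx" Z Z] K D objs homI Z_def by auto
  have "t = j \<cdot> ex"
  proof (rule A3_eqI[OF L])
    show "l1 \<cdot> t = l1 \<cdot> (j \<cdot> ex)" "l2 \<cdot> t = l2 \<cdot> (j \<cdot> ex)" "l3 \<cdot> t = l3 \<cdot> (j \<cdot> ex)"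
      using comp_reduce[of ex j l1] comp_reduce[of ex j l2] comp_reduce[of ex j l3] t j ED D E(2)
        objs Z_def
      by simp_all
  qed (use t j ED E(2) in simp_all)
  then have "factors_through j m"
    using factors_through_cancel_coequalizer[OF E(1) m j(1)] t j E(2) by simp
  then show ?thesis using that j Z_def by blast
qed

text \<open>The kernel of l2 consists of the triples (a,0,c) with a in ker qx and c in ker qy. Its
  projection onto ker qy is split by (0,0,my) and has its kernel inside (mx,0,0).\<close>
lemma A3_kernel_factors_through:
  assumes L: "is_A3_limit C qx qy L l1 l2 l3"
    and kx: "is_kernel C mx qx" and ky: "is_kernel C my qy"
    and m: "mono C m" "Cod C m = L" and kk: "is_kernel C kk l2"
    and jx: "jx \<in> Arr C" "Dom C jx = Dom C mx" "Cod C jx = L" "l1 \<cdot> jx = mx"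
      "l2 \<cdot> jx = zero (Dom C mx) (Dom C qx)" "l3 \<cdot> jx = zero (Dom C mx) (Dom C qx)"
      "factors_through jx m"
    and jy: "jy \<in> Arr C" "Dom C jy = Dom C my" "Cod C jy = L" "l1 \<cdot> jy = zero (Dom C my) (Dom C qx)"
      "l2 \<cdot> jy = zero (Dom C my) (Dom C qx)" "l3 \<cdot> jy = my" "factors_through jy m"
  shows "factors_through kk m"
proof -
  note D = A3_limitD[OF L] and KX = kernelD[OF kx] and KY = kernelD[OF ky] and KK = kernelD[OF kk]
  define K where "K = Dom C kk"
  have objs: "K \<in> Obj C" "Dom C qx \<in> Obj C" "Cod C qx \<in> Obj C" "Cod C qy \<in> Obj C"
    "Dom C mx \<in> Obj C" "Dom C my \<in> Obj C"
    using KK KX KY D dom_obj cod_obj K_def by auto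
  have "qx \<cdot> (l1 \<cdot> kk) = qx \<cdot> (l2 \<cdot> kk)" by (rule comp_square) (use D KK in simp_all)
  then obtain ka where ka: "ka \<in> Arr C" "Dom C ka = K" "Cod C ka = Dom C mx" "mx \<cdot> ka = l1 \<cdot> kk"
    using kernel_liftE[OF kx, of "l1 \<cdot> kk"] KK KX D objs K_def by auto
  have "qy \<cdot> (l3 \<cdot> kk) = qy \<cdot> (l2 \<cdot> kk)" by (rule comp_square) (use D KK in simp_all)
  then obtain pr where pr: "pr \<in> Arr C" "Dom C pr = K" "Cod C pr = Dom C my" "my \<cdot> pr = l3 \<cdot> kk"
    using kernel_liftE[OF ky, of "l3 \<cdot> kk"] KK KY D objs K_def by auto
  obtain c where c: "c \<in> Arr C" "Dom C c = Dom C my" "Cod C c = K" "kk \<cdot> c = jy"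
    using kernel_liftE[OF kk jy(1)] jy D K_def by auto
  have "my \<cdot> (pr \<cdot> c) = my \<cdot> Idt C (Dom C my)"
    using comp_square[of c pr my kk l3] pr c KY KK D jy objs K_def by simp
  then have "pr \<cdot> c = Idt C (Dom C my)"
    using mono_cancel[OF kernel_mono[OF ky]] pr c objs by simp
  then have s: "section_of c pr" using pr c unfolding section_of_def hom_def by simp
  obtain kb where kb: "is_kernel C kb pr" using kernel_exists[of pr] pr finitely_complete by blast
  note KB = kernelD[OF kb]
  have "Dom C kb \<in> Obj C" using KB dom_obj by blast
  have kk_kb: "kk \<cdot> kb = jx \<cdot> (ka \<cdot> kb)"
  proof (rule A3_eqI[OF L])
    have "l1 \<cdot> (kk \<cdot> kb) = mx \<cdot> (ka \<cdot> kb)"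
      by (rule comp_square) (use KK KB KX ka pr D K_def in simp_all)
    moreover have "l1 \<cdot> (jx \<cdot> (ka \<cdot> kb)) = mx \<cdot> (ka \<cdot> kb)"
      by (rule comp_reduce) (use KB ka jx D pr K_def in simp_all)
    ultimately show "l1 \<cdot> (kk \<cdot> kb) = l1 \<cdot> (jx \<cdot> (ka \<cdot> kb))" by simp
    have "l2 \<cdot> (kk \<cdot> kb) = zero K (Dom C qx) \<cdot> kb"
      by (rule comp_reduce) (use KK KB pr D K_def in simp_all)
    moreover have "l2 \<cdot> (jx \<cdot> (ka \<cdot> kb)) = zero (Dom C mx) (Dom C qx) \<cdot> (ka \<cdot> kb)"
      by (rule comp_reduce) (use KB ka jx D pr K_def in simp_all)
    ultimately show "l2 \<cdot> (kk \<cdot> kb) = l2 \<cdot> (jx \<cdot> (ka \<cdot> kb))"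
      using KB ka pr objs \<open>Dom C kb \<in> Obj C\<close> K_def by simp
    have "l3 \<cdot> (kk \<cdot> kb) = my \<cdot> (pr \<cdot> kb)"
      by (rule comp_square) (use KK KB KY pr D K_def in simp_all)
    moreover have "l3 \<cdot> (jx \<cdot> (ka \<cdot> kb)) = zero (Dom C mx) (Dom C qx) \<cdot> (ka \<cdot> kb)"
      by (rule comp_reduce) (use KB ka jx D pr K_def in simp_all)
    ultimately show "l3 \<cdot> (kk \<cdot> kb) = l3 \<cdot> (jx \<cdot> (ka \<cdot> kb))"
      using KB KY ka pr objs D \<open>Dom C kb \<in> Obj C\<close> K_def by simp
  qed (use KK KB jx ka pr D K_def in simp_all)
  show ?thesis
  proof (rule split_extension_factors_through[OF s kb])
    show "factors_through (kk \<cdot> c) m" using c jy by simp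
    show "factors_through (kk \<cdot> kb) m"
      using kk_kb factors_through_comp[OF jx(7) mono_arr[OF m(1)], of "ka \<cdot> kb"] ka KB pr jx(2)
        K_def by simp
  qed (use KK pr m K_def D in simp_all)
qed

text \<open>The diagonal splits l2, and the kernel of l2 is generated by (mx,0,0) and (0,0,my).\<close>
lemma A3_generated_iso:
  assumes L: "is_A3_limit C qx qy L l1 l2 l3"
    and kx: "is_kernel C mx qx" and ky: "is_kernel C my qy"
    and m: "mono C m" "Cod C m = L"
    and d: "d \<in> hom C (Dom C qx) L" "l1 \<cdot> d = Idt C (Dom C qx)" "l2 \<cdot> d = Idt C (Dom C qx)"
      "l3 \<cdot> d = Idt C (Dom C qx)" "factors_through d m"
    and jx: "jx \<in> Arr C" "Dom C jx = Dom C mx" "Cod C jx = L" "l1 \<cdot> jx = mx"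
      "l2 \<cdot> jx = zero (Dom C mx) (Dom C qx)" "l3 \<cdot> jx = zero (Dom C mx) (Dom C qx)"
      "factors_through jx m"
    and jy: "jy \<in> Arr C" "Dom C jy = Dom C my" "Cod C jy = L" "l1 \<cdot> jy = zero (Dom C my) (Dom C qx)"
      "l2 \<cdot> jy = zero (Dom C my) (Dom C qx)" "l3 \<cdot> jy = my" "factors_through jy m"
  shows "iso C m"
proof -
  note D = A3_limitD[OF L]
  obtain kk where kk: "is_kernel C kk l2" using kernel_exists[of l2] D finitely_complete by blast
  have "section_of d l2" using d D unfolding section_of_def by simp
  then show ?thesis
    using split_extension_mono_iso[OF _ kk m(1)] d m D
      A3_kernel_factors_through[OF L kx ky m kk jx jy] by simp
qed

end

locale gamma1_situation = homological_cat +
  fixes X A Y x y AX iAX1 iAX2 cx zx AY iAY1 iAY2 cy zy pi1 pi2 qx qy A3 l1 l2 l3 g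
  assumes x: "x \<in> hom C X A" and y: "y \<in> hom C Y A"
    and x_image: "image_is_normal_mono C x" and y_image: "image_is_normal_mono C y"
    and AX: "is_coproduct C A X AX iAX1 iAX2"
    and cx: "cx \<in> hom C AX A" "cx \<cdot> iAX1 = Idt C A" "cx \<cdot> iAX2 = x"
    and zx: "zx \<in> hom C AX A" "zx \<cdot> iAX1 = Idt C A" "zero_arr C (zx \<cdot> iAX2)"
    and AY: "is_coproduct C A Y AY iAY1 iAY2"
    and cy: "cy \<in> hom C AY A" "cy \<cdot> iAY1 = Idt C A" "cy \<cdot> iAY2 = y"
    and zy: "zy \<in> hom C AY A" "zy \<cdot> iAY1 = Idt C A" "zero_arr C (zy \<cdot> iAY2)"
    and P: "is_pullback C zx zy pi1 pi2"
    and qx: "is_cokernel C qx x" and qy: "is_cokernel C qy y"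
    and L: "is_A3_limit C qx qy A3 l1 l2 l3"
    and g: "g \<in> hom C (Dom C pi1) A3"
      "l1 \<cdot> g = cx \<cdot> pi1" "l2 \<cdot> g = zx \<cdot> pi1" "l3 \<cdot> g = cy \<cdot> pi2"
begin

lemma data_arrows:
  "x \<in> Arr C" "Dom C x = X" "Cod C x = A" "y \<in> Arr C" "Dom C y = Y" "Cod C y = A"
  "iAX1 \<in> Arr C" "Dom C iAX1 = A" "Cod C iAX1 = AX"
  "iAX2 \<in> Arr C" "Dom C iAX2 = X" "Cod C iAX2 = AX"
  "iAY1 \<in> Arr C" "Dom C iAY1 = A" "Cod C iAY1 = AY"
  "iAY2 \<in> Arr C" "Dom C iAY2 = Y" "Cod C iAY2 = AY"
  "cx \<in> Arr C" "Dom C cx = AX" "Cod C cx = A" "zx \<in> Arr C" "Dom C zx = AX" "Cod C zx = A"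
  "cy \<in> Arr C" "Dom C cy = AY" "Cod C cy = A" "zy \<in> Arr C" "Dom C zy = AY" "Cod C zy = A"
  "pi1 \<in> Arr C" "pi2 \<in> Arr C" "Dom C pi2 = Dom C pi1" "Cod C pi1 = AX" "Cod C pi2 = AY"
  "g \<in> Arr C" "Dom C g = Dom C pi1" "Cod C g = A3"
  "A \<in> Obj C" "X \<in> Obj C" "Y \<in> Obj C" "AX \<in> Obj C" "AY \<in> Obj C"
  using x y AX AY cx zx cy zy g pullbackD[OF P] dom_obj cod_obj
  unfolding is_coproduct_def hom_def by auto

lemma zero_components: "zx \<cdot> iAX2 = zero X A" "zy \<cdot> iAY2 = zero Y A"
  using zx(3) zy(3) zero_arr_iff data_arrows by simp_all

lemma gamma_components:
  assumes "t \<in> Arr C" "Cod C t = Dom C pi1"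
  shows "l1 \<cdot> (g \<cdot> t) = cx \<cdot> (pi1 \<cdot> t)" "l2 \<cdot> (g \<cdot> t) = zx \<cdot> (pi1 \<cdot> t)"
    "l3 \<cdot> (g \<cdot> t) = cy \<cdot> (pi2 \<cdot> t)"
  using comp_square[of t g l1 pi1 cx] comp_square[of t g l2 pi1 zx] comp_square[of t g l3 pi2 cy]
    assms data_arrows g A3_limitD[OF L] zero_components by simp_all

lemma gamma_hits_diagonal:
  obtains d where "d \<in> Arr C" "Dom C d = A" "Cod C d = Dom C pi1"
    "l1 \<cdot> (g \<cdot> d) = Idt C A" "l2 \<cdot> (g \<cdot> d) = Idt C A" "l3 \<cdot> (g \<cdot> d) = Idt C A"
proof -
  obtain d where d: "d \<in> Arr C" "Dom C d = A" "Cod C d = Dom C pi1" "pi1 \<cdot> d = iAX1"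
    "pi2 \<cdot> d = iAY1"
    using pullback_liftE[OF P, of iAX1 iAY1] data_arrows zx zy by auto
  then show ?thesis using that gamma_components[OF d(1,3)] cx zx cy by simp
qed

lemma gamma_hits_x:
  obtains h where "h \<in> Arr C" "Dom C h = X" "Cod C h = Dom C pi1"
    "l1 \<cdot> (g \<cdot> h) = x" "l2 \<cdot> (g \<cdot> h) = zero X A" "l3 \<cdot> (g \<cdot> h) = zero X A"
proof -
  have "zx \<cdot> iAX2 = zy \<cdot> zero X AY" using zero_components data_arrows by simp
  then obtain h where h: "h \<in> Arr C" "Dom C h = X" "Cod C h = Dom C pi1" "pi1 \<cdot> h = iAX2"
    "pi2 \<cdot> h = zero X AY"
    using pullback_liftE[OF P, of iAX2 "zero X AY"] data_arrows by auto
  then show ?thesis using that gamma_components[OF h(1,3)] cx zero_components data_arrows by simp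
qed

lemma gamma_hits_y:
  obtains h where "h \<in> Arr C" "Dom C h = Y" "Cod C h = Dom C pi1"
    "l1 \<cdot> (g \<cdot> h) = zero Y A" "l2 \<cdot> (g \<cdot> h) = zero Y A" "l3 \<cdot> (g \<cdot> h) = y"
proof -
  have "zx \<cdot> zero Y AX = zy \<cdot> iAY2" using zero_components data_arrows by simp
  then obtain h where h: "h \<in> Arr C" "Dom C h = Y" "Cod C h = Dom C pi1" "pi1 \<cdot> h = zero Y AX"
    "pi2 \<cdot> h = iAY2"
    using pullback_liftE[OF P, of "zero Y AX" iAY2] data_arrows by auto
  then show ?thesis using that gamma_components[OF h(1,3)] cy zero_components data_arrows by simp
qed

lemma mono_through_gamma_iso:
  assumes m: "mono C m" "Cod C m = A3" and gm: "factors_through g m"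
  shows "iso C m"
proof -
  note D = A3_limitD[OF L]
  have ma: "m \<in> Arr C" using mono_arr[OF m(1)] .
  have through: "factors_through (g \<cdot> t) m" if "t \<in> Arr C" "Cod C t = Dom C pi1" for t
    using factors_through_comp[OF gm ma] that data_arrows by simp
  have A: "Dom C qx = A" using cokernelD[OF qx] data_arrows by simp
  obtain ex mx where IX: "regular_epi C ex" "mono C mx" "normal_mono C mx" "Cod C ex = Dom C mx"
    "x = mx \<cdot> ex" using x_image unfolding image_is_normal_mono_def by blast
  obtain ey my where IY: "regular_epi C ey" "mono C my" "normal_mono C my" "Cod C ey = Dom C my"
    "y = my \<cdot> ey" using y_image unfolding image_is_normal_mono_def by blast
  obtain ax bx where EX: "is_coequalizer C ex ax bx" using IX(1) unfolding regular_epi_def by blast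
  obtain ay by' where EY: "is_coequalizer C ey ay by'"
    using IY(1) unfolding regular_epi_def by blast
  have kx: "is_kernel C mx qx" using image_kernel_of_cokernel[OF IX(1-4)] qx IX(5) by simp
  have ky: "is_kernel C my qy" using image_kernel_of_cokernel[OF IY(1-4)] qy IY(5) by simp
  have dom_ex: "Dom C ex = X" and dom_ey: "Dom C ey = Y"
    using data_arrows IX IY coequalizerD[OF EX] coequalizerD[OF EY] mono_arr by (metis dom_comp)+
  obtain d where d: "d \<in> Arr C" "Dom C d = A" "Cod C d = Dom C pi1"
    "l1 \<cdot> (g \<cdot> d) = Idt C A" "l2 \<cdot> (g \<cdot> d) = Idt C A" "l3 \<cdot> (g \<cdot> d) = Idt C A"
    by (rule gamma_hits_diagonal)
  obtain hx where hx: "hx \<in> Arr C" "Dom C hx = X" "Cod C hx = Dom C pi1"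
    "l1 \<cdot> (g \<cdot> hx) = x" "l2 \<cdot> (g \<cdot> hx) = zero X A" "l3 \<cdot> (g \<cdot> hx) = zero X A"
    by (rule gamma_hits_x)
  obtain hy where hy: "hy \<in> Arr C" "Dom C hy = Y" "Cod C hy = Dom C pi1"
    "l1 \<cdot> (g \<cdot> hy) = zero Y A" "l2 \<cdot> (g \<cdot> hy) = zero Y A" "l3 \<cdot> (g \<cdot> hy) = y"
    by (rule gamma_hits_y)
  obtain jx where jx: "jx \<in> Arr C" "Dom C jx = Dom C mx" "Cod C jx = A3" "l1 \<cdot> jx = mx"
    "l2 \<cdot> jx = zero (Dom C mx) (Dom C qx)" "l3 \<cdot> jx = zero (Dom C mx) (Dom C qx)"
    "factors_through jx m"
    by (rule A3_kernel_part_factors_through[OF L kx EX IX(4) m(1), of "g \<cdot> hx"])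
       (use hx data_arrows through dom_ex IX(5) A in simp_all)
  obtain jy where jy: "jy \<in> Arr C" "Dom C jy = Dom C my" "Cod C jy = A3" "l3 \<cdot> jy = my"
    "l2 \<cdot> jy = zero (Dom C my) (Dom C qy)" "l1 \<cdot> jy = zero (Dom C my) (Dom C qy)"
    "factors_through jy m"
    by (rule A3_kernel_part_factors_through[OF A3_limit_swap[OF L] ky EY IY(4) m(1), of "g \<cdot> hy"])
       (use hy data_arrows through dom_ey IY(5) D A in simp_all)
  show ?thesis
    by (rule A3_generated_iso[OF L kx ky m, of "g \<cdot> d" jx jy])
       (use d jx jy data_arrows through D A homI in simp_all)
qed

lemma normal_epi_gamma: "normal_epi C g"
proof -
  obtain e m where em: "regular_epi C e" "mono C m" "Cod C e = Dom C m" "g = m \<cdot> e"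
    using regular_epi_mono_factorization data_arrows by blast
  obtain a b where E: "is_coequalizer C e a b" using em(1) unfolding regular_epi_def by blast
  note ED = coequalizerD[OF E]
  have "Cod C m = A3" using em ED data_arrows mono_arr by (metis cod_comp)
  moreover have "factors_through g m" using em ED mono_arr by (intro factors_throughI[of e]) auto
  ultimately have "iso C m" using mono_through_gamma_iso em(2) by blast
  moreover obtain k where "is_cokernel C e k"
    using regular_epi_normal_epi[OF em(1)] unfolding normal_epi_def by blast
  ultimately show ?thesis
    unfolding normal_epi_def using iso_comp_cokernel em(3,4) by metis
qed

end

theorem theorem1p6:
  fixes C :: "('o, 'm) category_data"
  assumes "homological C" and "finitely_cocomplete C"
    and "x \<in> hom C X A" and "y \<in> hom C Y A"
    and "image_is_normal_mono C x" and "image_is_normal_mono C y"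
    \<comment> \<open>A + X with injections, and the copairings [1,x] and [1,0]\<close>
    and "is_coproduct C A X AX iAX1 iAX2"
    and "cx \<in> hom C AX A" and "Comp C cx iAX1 = Idt C A" and "Comp C cx iAX2 = x"
    and "zx \<in> hom C AX A" and "Comp C zx iAX1 = Idt C A" and "zero_arr C (Comp C zx iAX2)"
    \<comment> \<open>A + Y with injections, and the copairings [1,y] and [1,0]\<close>
    and "is_coproduct C A Y AY iAY1 iAY2"
    and "cy \<in> hom C AY A" and "Comp C cy iAY1 = Idt C A" and "Comp C cy iAY2 = y"
    and "zy \<in> hom C AY A" and "Comp C zy iAY1 = Idt C A" and "zero_arr C (Comp C zy iAY2)"
    \<comment> \<open>(A+X) \<times>_A (A+Y) with projections pi1, pi2\<close>
    and "is_pullback C zx zy pi1 pi2"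
    \<comment> \<open>cokernels of x and y, and the limit A_3\<close>
    and "is_cokernel C qx x" and "is_cokernel C qy y"
    and "is_A3_limit C qx qy A3 l1 l2 l3"
    \<comment> \<open>gamma_1 = <[1,x] pi1, [1,0] pi1, [1,y] pi2>\<close>
    and "g \<in> hom C (Dom C pi1) A3"
    and "Comp C l1 g = Comp C cx pi1" and "Comp C l2 g = Comp C zx pi1"
    and "Comp C l3 g = Comp C cy pi2"
  shows "normal_epi C g"
proof -
  have category: "category C" and "pointed C"
    using assms(1) unfolding homological_def regular_category_def by blast+
  then obtain z where zero: "zero_obj C z" unfolding pointed_def by blast
  interpret gamma1_situation C z X A Y x y AX iAX1 iAX2 cx zx AY iAY1 iAY2 cy zy pi1 pi2
      qx qy A3 l1 l2 l3 g
    by unfold_locales (fact category zero assms)+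
  show ?thesis by (rule normal_epi_gamma)
qed

end
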